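(* Assume (C1) and (C2). Then $$\inf_{u\in\mathcal{N}}I(u)=:c_*=\inf_{u\in\mathcal{D},\,u\neq0}\ \max_{t\ge0}I(tu)$$ and $$\inf_{u\in\mathcal{M}}I(u)=:m_*=\inf_{u\in\mathcal{D},\,u^+\neq0,\,u^-\neq0}\ \max_{s,t\ge0}I(su^++tu^-).$$
   Context: Fix real numbers $p,q,r$ with $1<p<q$, $\frac p2$ a positive integer, and $r\ge1$, and functions $a,b,c:\mathbb{Z}\to(0,+\infty)$. Conditions: - (C1) There is $b_0>0$ with $b(n)\ge b_0$ for all $n$ and $b(n)\to+\infty$ as $|n|\to\infty$. - (C2) There is $c_0>0$ with $c(n)\le c_0$ for all $n$ and $\sum_n c(n)<+\infty$. Notation for a real sequence $u=(u(n))_{n\in\mathbb{Z}}$: $\Delta u(n)=u(n+1)-u(n)$, $u^+(n)=\max\{u(n),0\}$, $u^-(n)=\min\{u(n),0\}$. Spaces: - $E$ is the set of real sequences $u$ with $\|u\|:=\big(\sum_n[a(n)|\Delta u(n)|^p+b(n)|u(n)|^p]\big)^{1/p}<\infty$. - $\mathcal{D}=\{u\in E:\sum_n c(n)|u(n)|^q\ln|u(n)|^r<+\infty\}$, where terms with $u(n)=0$ are read as $0$. For $u,v\in\mathcal{D}$: - $I(u)=\frac1p\|u\|^p+\frac{r}{q^2}\sum_n c(n)|u(n)|^q-\frac1q\sum_n c(n)|u(n)|^q\ln|u(n)|^r$. - $\langle I'(u),v\rangle=\sum_n[a(n)|\Delta u(n)|^{p-2}\Delta u(n)\Delta v(n)+b(n)|u(n)|^{p-2}u(n)v(n)]-\sum_n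 c(n)|u(n)|^{q-2}u(n)v(n)\ln|u(n)|^r$. Sets: - $\mathcal{N}=\{u\in\mathcal{D}:u\ne0,\ \langle I'(u),u\rangle=0\}$. - $\mathcal{M}=\{u\in\mathcal{D}:u^+\ne0,\ u^-\neq0,\ \langle I'(u),u^+\rangle=0,\ \langle I'(u),u^-\rangle=0\}$. *)

theory Defs
  imports "HOL-Analysis.Analysis"
begin

definition fdiff :: "(int \<Rightarrow> real) \<Rightarrow> int \<Rightarrow> real" where
  "fdiff u n = u (n + 1) - u n"

definition posp :: "(int \<Rightarrow> real) \<Rightarrow> int \<Rightarrow> real" where
  "posp u n = max (u n) 0"

definition negp :: "(int \<Rightarrow> real) \<Rightarrow> int \<Rightarrow> real" where
  "negp u n = min (u n) 0"

definition scal :: "real \<Rightarrow> (int \<Rightarrow> real) \<Rightarrow> int \<Rightarrow> real" where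
  "scal t u n = t * u n"

definition E_space :: "(int \<Rightarrow> real) \<Rightarrow> (int \<Rightarrow> real) \<Rightarrow> real \<Rightarrow> (int \<Rightarrow> real) set" where
  "E_space a b p = {u. (\<lambda>n. a n * \<bar>fdiff u n\<bar> powr p + b n * \<bar>u n\<bar> powr p) summable_on UNIV}"

definition normE :: "(int \<Rightarrow> real) \<Rightarrow> (int \<Rightarrow> real) \<Rightarrow> real \<Rightarrow> (int \<Rightarrow> real) \<Rightarrow> real" where
  "normE a b p u = (\<Sum>\<^sub>\<infinity> n. a n * \<bar>fdiff u n\<bar> powr p + b n * \<bar>u n\<bar> powr p) powr (1 / p)"

text \<open>Note: in Isabelle ln 0 = 0 and 0 powr x = 0, so terms with u n = 0 are 0.\<close>

definition D_set :: "(int \<Rightarrow> real) \<Rightarrow> (int \<Rightarrow> real) \<Rightarrow> (int \<Rightarrow> real) \<Rightarrow> real \<Rightarrow> real \<Rightarrow> real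
    \<Rightarrow> (int \<Rightarrow> real) set" where
  "D_set a b c p q r = {u \<in> E_space a b p.
      (\<lambda>n. c n * \<bar>u n\<bar> powr q * ln (\<bar>u n\<bar> powr r)) summable_on UNIV}"

definition Ifun :: "(int \<Rightarrow> real) \<Rightarrow> (int \<Rightarrow> real) \<Rightarrow> (int \<Rightarrow> real) \<Rightarrow> real \<Rightarrow> real \<Rightarrow> real
    \<Rightarrow> (int \<Rightarrow> real) \<Rightarrow> real" where
  "Ifun a b c p q r u = (1 / p) * normE a b p u powr p
      + (r / q\<^sup>2) * (\<Sum>\<^sub>\<infinity> n. c n * \<bar>u n\<bar> powr q)
      - (1 / q) * (\<Sum>\<^sub>\<infinity> n. c n * \<bar>u n\<bar> powr q * ln (\<bar>u n\<bar> powr r))"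

definition dIfun :: "(int \<Rightarrow> real) \<Rightarrow> (int \<Rightarrow> real) \<Rightarrow> (int \<Rightarrow> real) \<Rightarrow> real \<Rightarrow> real \<Rightarrow> real
    \<Rightarrow> (int \<Rightarrow> real) \<Rightarrow> (int \<Rightarrow> real) \<Rightarrow> real" where
  "dIfun a b c p q r u v =
     (\<Sum>\<^sub>\<infinity> n. a n * \<bar>fdiff u n\<bar> powr (p - 2) * fdiff u n * fdiff v n
            + b n * \<bar>u n\<bar> powr (p - 2) * u n * v n)
     - (\<Sum>\<^sub>\<infinity> n. c n * \<bar>u n\<bar> powr (q - 2) * u n * v n * ln (\<bar>u n\<bar> powr r))"

definition Nehari :: "(int \<Rightarrow> real) \<Rightarrow> (int \<Rightarrow> real) \<Rightarrow> (int \<Rightarrow> real) \<Rightarrow> real \<Rightarrow> real \<Rightarrow> real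
    \<Rightarrow> (int \<Rightarrow> real) set" where
  "Nehari a b c p q r = {u \<in> D_set a b c p q r. u \<noteq> (\<lambda>_. 0) \<and> dIfun a b c p q r u u = 0}"

definition NodalNehari :: "(int \<Rightarrow> real) \<Rightarrow> (int \<Rightarrow> real) \<Rightarrow> (int \<Rightarrow> real) \<Rightarrow> real \<Rightarrow> real \<Rightarrow> real
    \<Rightarrow> (int \<Rightarrow> real) set" where
  "NodalNehari a b c p q r = {u \<in> D_set a b c p q r. posp u \<noteq> (\<lambda>_. 0) \<and> negp u \<noteq> (\<lambda>_. 0)
      \<and> dIfun a b c p q r u (posp u) = 0 \<and> dIfun a b c p q r u (negp u) = 0}"

end

theory Submission
  imports Defs "HOL-Real_Asymp.Real_Asymp"
begin

text \<open>
  Since \<open>p = N\<close> is an even integer, the energy of \<open>s u\<^sup>+ + t u\<^sup>-\<close> (\<open>s, t \<ge> 0\<close>) splits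
  explicitly: it is \<open>(K(s, t) + s\<^sup>N B\<^sup>+ + t\<^sup>N B\<^sup>-) / N + \<phi>\<^sup>+(s) + \<phi>\<^sup>-(t)\<close>, where \<open>K\<close> is the
  gradient energy (a convex polynomial in \<open>(s, t)\<close>) and \<open>\<phi>(s) = Y s\<^sup>q - Z s\<^sup>q ln s\<close> with \<open>Z > 0\<close>
  comes from the \<open>c\<close>-terms. The inequalities \<open>(1 - m\<^sup>q) / q \<le> (1 - m\<^sup>N) / N\<close> and
  \<open>x - 1 \<le> x ln x\<close>, together with a pointwise Jensen-type estimate for the mixed gradient term,
  show that a point of \<open>\<N>\<close> (of \<open>\<M>\<close>) maximises \<open>I\<close> on its ray \<open>{t u}\<close> (on its quadrant
  \<open>{s u\<^sup>+ + t u\<^sup>-}\<close>). Conversely, every ray meets \<open>\<N>\<close> by the intermediate value theorem, and on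
  every quadrant \<open>I\<close> attains a maximum, since the \<open>s\<^sup>q ln s\<close> terms drive it to \<open>-\<infinity>\<close>. The
  maximum is interior because \<open>s\<^sup>N\<close> dominates near \<open>0\<close>, and Fermat's rule there, applied through
  the tangent inequality of \<open>K\<close>, yields the two equations defining \<open>\<M>\<close>. So \<open>I(\<N>)\<close> and
  \<open>I(\<M>)\<close> are exactly the sets of fibre maxima, and their infima coincide.
\<close>

section \<open>Elementary real inequalities\<close>

lemma powr_above_tangent:
  fixes m y q :: real
  assumes q: "1 \<le> q" and m: "0 < m" and y: "0 \<le> y"
  shows "m powr q + q * m powr (q - 1) * (y - m) \<le> y powr q"
proof (cases "y = 0")
  case True
  have "m powr q = m powr (q - 1) * m"
    using m by (simp add: powr_diff)
  moreover have "m powr (q - 1) * m * (1 - q) \<le> 0"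
    using q m by (intro mult_nonneg_nonpos) auto
  ultimately show ?thesis
    using True by (simp add: algebra_simps)
next
  case False
  have "q * m powr (q - 1) * (y - m) \<le> y powr q - m powr q"
  proof (rule convex_on_imp_above_tangent[OF powr_convex[OF q]])
    show "((\<lambda>x. x powr q) has_field_derivative q * m powr (q - 1)) (at m within {0<..})"
      using m by (auto intro!: derivative_eq_intros)
  qed (use m y False in \<open>auto simp: interior_open\<close>)
  then show ?thesis
    by simp
qed

lemma power_even_above_tangent:
  fixes x y :: real
  assumes "even N"
  shows "x ^ N + real N * x ^ (N - 1) * (y - x) \<le> y ^ N"
proof -
  have "real N * x ^ (N - 1) * (y - x) \<le> y ^ N - x ^ N"
    by (rule convex_on_imp_above_tangent[OF convex_power_even[OF assms]])
       (auto intro!: derivative_eq_intros)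
  then show ?thesis
    by simp
qed

lemma one_minus_powr_div_antimono:
  fixes m p q :: real
  assumes p: "0 < p" and pq: "p \<le> q" and m: "0 \<le> m"
  shows "(1 - m powr q) / q \<le> (1 - m powr p) / p"
proof (cases "m = 0")
  case True
  then show ?thesis
    using p pq by (simp add: divide_left_mono)
next
  case False
  define y k where "y = m powr p" and "k = q / p"
  have k: "1 \<le> k" and q: "q = k * p"
    using p pq by (simp_all add: k_def)
  have "y powr k = m powr q"
    using p by (simp add: y_def k_def powr_powr)
  moreover have "1 + k * (y - 1) \<le> y powr k"
    using powr_above_tangent[OF k, of 1 y] by (simp add: y_def)
  ultimately have "1 - m powr q \<le> k * (1 - y)"
    by (simp add: algebra_simps)
  then have "(1 - m powr q) / q \<le> k * (1 - y) / q"
    using p pq by (intro divide_right_mono) auto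
  also have "\<dots> = (1 - m powr p) / p"
    using p q k by (simp add: y_def)
  finally show ?thesis .
qed

lemma power_div_plus_one_minus_powr_div_le:
  fixes s q :: real
  assumes "0 < N" "real N \<le> q" "0 \<le> s"
  shows "s ^ N / N + (1 - s powr q) / q \<le> 1 / N"
  using one_minus_powr_div_antimono[of "real N" q s] assms
  by (simp add: powr_realpow' diff_divide_distrib)

lemma minus_one_le_mult_ln:
  fixes x :: real
  assumes "0 \<le> x"
  shows "x - 1 \<le> x * ln x"
proof (cases "x = 0")
  case False
  then have x: "0 < x"
    using assms by simp
  have "ln (1 / x) \<le> 1 / x - 1"
    using x by (intro ln_le_minus_one) simp
  then have "x * (- ln x) \<le> x * (1 / x - 1)"
    using x by (intro mult_left_mono) (auto simp: ln_div)
  then show ?thesis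
    using x by (simp add: algebra_simps)
qed simp

lemma powr_convex_two_points:
  fixes s t x y q :: real
  assumes "0 \<le> s" "0 \<le> t" "0 \<le> x" "0 \<le> y" "0 < x + y" "1 \<le> q"
  shows "(x + y) * ((s * x + t * y) / (x + y)) powr q \<le> x * s powr q + y * t powr q"
proof -
  define m where "m = (s * x + t * y) / (x + y)"
  show ?thesis
  proof (cases "m = 0")
    case False
    have "0 \<le> m"
      using assms by (simp add: m_def)
    with False have m: "0 < m"
      by simp
    have "x * (s - m) + y * (t - m) = 0"
      using assms by (simp add: m_def field_simps)
    then have "(x + y) * m powr q = (x + y) * m powr q + q * m powr (q - 1) * (x * (s - m) + y * (t - m))"
      by simp
    also have "\<dots> = x * (m powr q + q * m powr (q - 1) * (s - m)) + y * (m powr q + q * m powr (q - 1) * (t - m))"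
      by (simp add: algebra_simps)
    also have "\<dots> \<le> x * s powr q + y * t powr q"
      using assms m by (intro add_mono mult_left_mono powr_above_tangent) auto
    finally show ?thesis
      by (simp add: m_def)
  qed (use assms in \<open>simp add: m_def\<close>)
qed

lemma nodal_pointwise_ineq_nonneg:
  fixes x y s t q :: real
  assumes N: "0 < N" "real N \<le> q" and st: "0 \<le> s" "0 \<le> t" and xy: "0 \<le> x" "0 \<le> y"
  shows "(1 - s powr q) / q * ((x + y) ^ (N - 1) * x) + (1 - t powr q) / q * ((x + y) ^ (N - 1) * y)
           \<le> ((x + y) ^ N - (s * x + t * y) ^ N) / N"
proof (cases "x + y = 0")
  case True
  with xy have "x = 0" "y = 0"
    by auto
  then show ?thesis
    using N by simp
next
  case False
  define S m where "S = x + y" and "m = (s * x + t * y) / (x + y)"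
  have S: "0 < S" and m: "0 \<le> m" and sxty: "s * x + t * y = S * m"
    using False xy st by (auto simp: S_def m_def)
  have q: "0 < q" "1 \<le> q"
    using N by auto
  have SN: "S ^ N = S ^ (N - 1) * S"
    using N by (simp add: power_eq_if)
  have "(1 - s powr q) / q * (S ^ (N - 1) * x) + (1 - t powr q) / q * (S ^ (N - 1) * y)
      = S ^ (N - 1) / q * (S - (x * s powr q + y * t powr q))"
    using q by (simp add: S_def field_simps)
  also have "\<dots> \<le> S ^ (N - 1) / q * (S - S * m powr q)"
    using powr_convex_two_points[OF st xy _ q(2)] S q by (intro mult_left_mono) (auto simp: S_def m_def)
  also have "\<dots> = S ^ N * ((1 - m powr q) / q)"
    by (simp add: SN field_simps)
  also have "\<dots> \<le> S ^ N * ((1 - m powr real N) / real N)"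
    using one_minus_powr_div_antimono[OF _ N(2) m] N S by (intro mult_left_mono) auto
  also have "\<dots> = (S ^ N - (S * m) ^ N) / N"
    using N m by (simp add: powr_realpow' power_mult_distrib field_simps)
  finally show ?thesis
    by (simp add: S_def sxty)
qed

text \<open>For \<open>x = \<Delta>v\<^sup>+(n)\<close> and \<open>y = \<Delta>v\<^sup>-(n)\<close>, which have the same sign, this is the
  pointwise form of \<open>I(s v\<^sup>+ + t v\<^sup>-) \<le> I(v)\<close> for the gradient term when \<open>v\<close> lies on the nodal
  Nehari set.\<close>

lemma nodal_pointwise_ineq:
  fixes x y s t q :: real
  assumes N: "even N" "0 < N" "real N \<le> q" and st: "0 \<le> s" "0 \<le> t" and xy: "0 \<le> x * y"
  shows "(1 - s powr q) / q * ((x + y) ^ (N - 1) * x) + (1 - t powr q) / q * ((x + y) ^ (N - 1) * y)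
           \<le> ((x + y) ^ N - (s * x + t * y) ^ N) / N"
proof (cases "0 \<le> x \<and> 0 \<le> y")
  case True
  then show ?thesis
    using nodal_pointwise_ineq_nonneg[OF N(2,3) st] by blast
next
  case False
  then have "0 \<le> - x" "0 \<le> - y"
    using xy by (auto simp: zero_le_mult_iff)
  note ineq = nodal_pointwise_ineq_nonneg[OF N(2,3) st this]
  have e: "- x + - y = - (x + y)" "s * - x + t * - y = - (s * x + t * y)"
    by simp_all
  have "odd (N - 1)"
    using N by simp
  from ineq[unfolded e power_minus_even[OF N(1)] power_minus_odd[OF this]] show ?thesis
    by simp
qed

lemma abs_power_pred_mult_le:
  fixes x y :: real
  assumes "0 < n"
  shows "\<bar>x ^ (n - 1) * y\<bar> \<le> \<bar>x\<bar> ^ n + \<bar>y\<bar> ^ n"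
proof -
  have pow: "z ^ (n - 1) * z = z ^ n" for z :: real
    using assms by (simp add: power_eq_if[of z n])
  have "\<bar>x\<bar> ^ (n - 1) * \<bar>y\<bar> \<le> max \<bar>x\<bar> \<bar>y\<bar> ^ (n - 1) * max \<bar>x\<bar> \<bar>y\<bar>"
    by (intro mult_mono power_mono) auto
  also have "\<dots> \<le> \<bar>x\<bar> ^ n + \<bar>y\<bar> ^ n"
    unfolding max_def using pow[of "\<bar>x\<bar>"] pow[of "\<bar>y\<bar>"] by auto
  finally show ?thesis
    by (simp add: abs_mult power_abs)
qed

lemma abs_lincomb_mono:
  fixes x y s t s' t' :: real
  assumes "0 \<le> x * y" "0 \<le> s" "s \<le> s'" "0 \<le> t" "t \<le> t'"
  shows "\<bar>s * x + t * y\<bar> \<le> \<bar>s' * x + t' * y\<bar>"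
proof (cases "0 \<le> x \<and> 0 \<le> y")
  case True
  then have "0 \<le> s * x + t * y" "s * x + t * y \<le> s' * x + t' * y"
    using assms by (auto intro: add_mono mult_right_mono)
  then show ?thesis
    by simp
next
  case False
  then have "x \<le> 0" "y \<le> 0"
    using assms(1) by (auto simp: zero_le_mult_iff)
  then have "s * x + t * y \<le> 0" "s' * x + t' * y \<le> s * x + t * y"
    using assms mult_nonneg_nonpos[of s x] mult_nonneg_nonpos[of t y]
      mult_right_mono_neg[of s s' x] mult_right_mono_neg[of t t' y] by linarith+
  then show ?thesis
    by simp
qed

lemma abs_powr_ln_powr_scale:
  fixes s x q r :: real
  assumes "0 \<le> s"
  shows "\<bar>s * x\<bar> powr q * ln (\<bar>s * x\<bar> powr r)
    = s powr q * (\<bar>x\<bar> powr q * ln (\<bar>x\<bar> powr r)) + r * ln s * (s powr q * \<bar>x\<bar> powr q)"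
proof (cases "s = 0 \<or> x = 0")
  case False
  then have "0 < s" "0 < \<bar>x\<bar>"
    using assms by auto
  then show ?thesis
    by (simp add: abs_mult powr_mult ln_powr ln_mult algebra_simps)
qed auto

section \<open>The profile \<open>s \<mapsto> X s\<^sup>N + Y s\<^sup>q - Z s\<^sup>q ln s\<close>\<close>

lemma continuous_on_powr_mult_ln:
  fixes q :: real
  assumes "0 < q"
  shows "continuous_on {0..} (\<lambda>x. x powr q * ln x)"
  unfolding continuous_on_def
proof
  fix x :: real
  assume x: "x \<in> {0..}"
  show "((\<lambda>x. x powr q * ln x) \<longlongrightarrow> x powr q * ln x) (at x within {0..})"
  proof (cases "x = 0")
    case True
    have "((\<lambda>x::real. x powr q * ln x) \<longlongrightarrow> 0) (at_right 0)"
      using assms by real_asymp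
    then show ?thesis
      using True by (simp add: at_within_Ici_at_right)
  next
    case False
    then have "isCont (\<lambda>x. x powr q * ln x) x"
      using x by (auto intro!: continuous_intros)
    then show ?thesis
      using continuous_at_imp_continuous_at_within continuous_within by blast
  qed
qed

lemma continuous_on_log_profile:
  fixes X Y Z q :: real
  assumes "0 < q"
  shows "continuous_on {0..} (\<lambda>s. X * s ^ N + Y * s powr q - Z * s powr q * ln s)"
proof -
  have "continuous_on {0..} (\<lambda>s. X * s ^ N + Y * s powr q - Z * (s powr q * ln s))"
    using assms
    by (intro continuous_on_add continuous_on_diff continuous_on_mult continuous_on_const
        continuous_on_power continuous_on_id continuous_on_powr' continuous_on_powr_mult_ln) auto
  then show ?thesis
    by (simp add: mult.assoc)
qed

lemma log_profile_tendsto_at_bot: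
  fixes X Y Z q :: real
  assumes "0 < Z" "real N < q"
  shows "filterlim (\<lambda>s. X * s ^ N + Y * s powr q - Z * s powr q * ln s) at_bot at_top"
  using assms by real_asymp

lemma log_profile_pos_near_0:
  fixes X Y Z q :: real
  assumes "0 < X" "real N < q"
  obtains e where "0 < e" "0 < X * e ^ N + Y * e powr q - Z * e powr q * ln e"
proof -
  have "eventually (\<lambda>s. 0 < X * s ^ N + Y * s powr q - Z * s powr q * ln s) (at_right 0)"
    using assms by real_asymp
  then obtain b where "0 < b" "\<And>s. 0 < s \<Longrightarrow> s < b \<Longrightarrow> 0 < X * s ^ N + Y * s powr q - Z * s powr q * ln s"
    unfolding eventually_at_right_field by auto
  then show thesis
    using that[of "b / 2"] by simp
qed

lemma bounded_above_if_tendsto_at_bot: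
  fixes f :: "real \<Rightarrow> real"
  assumes "continuous_on {0..} f" "filterlim f at_bot at_top"
  shows "\<exists>M. \<forall>s\<ge>0. f s \<le> M"
proof -
  obtain R where R: "0 \<le> R" "\<And>s. R \<le> s \<Longrightarrow> f s \<le> 0"
    using assms(2) unfolding filterlim_at_bot eventually_at_top_linorder
    by (metis order.trans nle_le)
  have "continuous_on {0..R} f"
    using assms(1) by (rule continuous_on_subset) auto
  then obtain x where x: "\<forall>s\<in>{0..R}. f s \<le> f x"
    using continuous_attains_sup[of "{0..R}" f] R(1) by auto
  have "f s \<le> max 0 (f x)" if "0 \<le> s" for s
  proof (cases "s \<le> R")
    case True
    then show ?thesis
      using x that by (simp add: le_max_iff_disj)
  next
    case False
    then show ?thesis
      using R(2)[of s] by auto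
  qed
  then show ?thesis
    by blast
qed

lemma log_profile_coercive:
  fixes X Y Z q :: real
  assumes "0 < Z" "real N < q"
  obtains M where "filterlim (\<lambda>s. X * s ^ N + Y * s powr q - Z * s powr q * ln s) at_bot at_top"
    "\<And>s. 0 \<le> s \<Longrightarrow> X * s ^ N + Y * s powr q - Z * s powr q * ln s \<le> M"
proof -
  have "0 < q"
    using assms(2) by linarith
  obtain M where "\<forall>s\<ge>0. X * s ^ N + Y * s powr q - Z * s powr q * ln s \<le> M"
    using bounded_above_if_tendsto_at_bot[OF continuous_on_log_profile[OF \<open>0 < q\<close>]
        log_profile_tendsto_at_bot[OF assms, where X = X and Y = Y]] by blast
  then show thesis
    using that log_profile_tendsto_at_bot[OF assms] by blast
qed

text \<open>The conclusion is \<open>s0\<close> times the derivative of the left-hand side of the hypothesis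
  at its interior maximum \<open>s0\<close>.\<close>

lemma fermat_log_profile:
  fixes G B Y Z s0 q :: real
  assumes s0: "0 < s0" and N: "0 < N"
    and max: "\<And>y. 0 < y \<Longrightarrow> G * y + B * y ^ N / N + Y * y powr q - Z * y powr q * ln y
      \<le> G * s0 + B * s0 ^ N / N + Y * s0 powr q - Z * s0 powr q * ln s0"
  shows "G * s0 + B * s0 ^ N + q * Y * s0 powr q - Z * s0 powr q * (q * ln s0 + 1) = 0"
proof -
  define l where "l y = G * y + B * y ^ N / N + Y * y powr q - Z * y powr q * ln y" for y
  define L where "L = G + B * s0 ^ (N - 1) + Y * (q * s0 powr (q - 1))
    - Z * (q * s0 powr (q - 1) * ln s0 + s0 powr q / s0)"
  have "(l has_real_derivative L) (at s0)"
    unfolding l_def L_def using s0 N by (auto intro!: derivative_eq_intros simp: field_simps)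
  moreover have "\<forall>y. \<bar>s0 - y\<bar> < s0 \<longrightarrow> l y \<le> l s0"
    unfolding l_def using max by (auto simp: abs_less_iff)
  ultimately have "L = 0"
    using s0 by (intro DERIV_local_max) auto
  moreover have "s0 * L = G * s0 + B * s0 ^ N + q * Y * s0 powr q - Z * s0 powr q * (q * ln s0 + 1)"
    using s0 N by (simp add: L_def powr_diff field_simps power_eq_if[of s0 N])
  ultimately show ?thesis
    by simp
qed

lemma continuous_attains_max_on_quadrant:
  fixes h :: "real \<times> real \<Rightarrow> real" and P Q :: "real \<Rightarrow> real"
  assumes cont: "continuous_on ({0..} \<times> {0..}) h"
    and P: "filterlim P at_bot at_top" "\<And>s. 0 \<le> s \<Longrightarrow> P s \<le> MP"
    and Q: "filterlim Q at_bot at_top" "\<And>t. 0 \<le> t \<Longrightarrow> Q t \<le> MQ"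
    and bound: "\<And>s t. 0 \<le> s \<Longrightarrow> 0 \<le> t \<Longrightarrow> h (s, t) \<le> P s + Q t"
  obtains s0 t0 where "0 \<le> s0" "0 \<le> t0" "\<And>s t. 0 \<le> s \<Longrightarrow> 0 \<le> t \<Longrightarrow> h (s, t) \<le> h (s0, t0)"
proof -
  define L where "L = h (0, 0)"
  have "eventually (\<lambda>s. P s < L - MQ \<and> Q s < L - MP) at_top"
    using P(1) Q(1) unfolding filterlim_at_bot_dense by (intro eventually_conj) auto
  then obtain R where R: "0 \<le> R" "\<And>s. R \<le> s \<Longrightarrow> P s < L - MQ \<and> Q s < L - MP"
    unfolding eventually_at_top_linorder by (metis order.trans nle_le)
  define S where "S = {0..R} \<times> {0..R}"
  have S: "compact S" "S \<noteq> {}" "S \<subseteq> {0..} \<times> {0..}"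
    using R(1) by (auto simp: S_def compact_Times)
  obtain z where z: "z \<in> S" "\<And>y. y \<in> S \<Longrightarrow> h y \<le> h z"
    using continuous_attains_sup[OF S(1,2) continuous_on_subset[OF cont S(3)]] by blast
  have "h (s, t) \<le> h z" if st: "0 \<le> s" "0 \<le> t" for s t
  proof (cases "s \<le> R \<and> t \<le> R")
    case True
    then show ?thesis
      using st z(2) by (auto simp: S_def)
  next
    case False
    then have "P s + Q t < L"
      using R(2)[of s] R(2)[of t] P(2)[OF st(1)] Q(2)[OF st(2)] by force
    moreover have "L \<le> h z"
      using z(2) R(1) by (auto simp: L_def S_def)
    ultimately show ?thesis
      using bound[OF st] by linarith
  qed
  then show thesis
    using that[of "fst z" "snd z"] z(1) by (auto simp: S_def)
qed

lemma summable_on_real_dominated: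
  fixes f g :: "'a \<Rightarrow> real"
  assumes "f summable_on A" "\<And>x. x \<in> A \<Longrightarrow> \<bar>g x\<bar> \<le> \<bar>f x\<bar>"
  shows "g summable_on A"
proof -
  have "(\<lambda>x. norm (f x)) summable_on A"
    using assms(1) summable_on_iff_abs_summable_on_real by blast
  then have "(\<lambda>x. norm (g x)) summable_on A"
    by (rule summable_on_comparison_test) (use assms(2) in auto)
  then show ?thesis
    using summable_on_iff_abs_summable_on_real by blast
qed

lemma infsum_pos_if_pos_term:
  fixes f :: "'a \<Rightarrow> real"
  assumes "f summable_on A" "\<And>x. x \<in> A \<Longrightarrow> 0 \<le> f x" "k \<in> A" "0 < f k"
  shows "0 < infsum f A"
  using has_sum_strict_mono[OF has_sum_0_simp has_sum_infsum[OF assms(1)]] assms(2-4) by blast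

lemma infsum_sum_finite:
  fixes f :: "'i \<Rightarrow> 'a \<Rightarrow> real"
  assumes "finite K" "\<And>k. k \<in> K \<Longrightarrow> f k summable_on A"
  shows "infsum (\<lambda>x. \<Sum>k\<in>K. f k x) A = (\<Sum>k\<in>K. infsum (f k) A)"
proof -
  have "((\<lambda>x. \<Sum>k\<in>K. f k x) has_sum (\<Sum>k\<in>K. infsum (f k) A)) A"
    using assms
  proof (induction K rule: finite_induct)
    case (insert k K)
    then show ?case
      by (simp add: has_sum_add)
  qed simp
  then show ?thesis
    by (rule infsumI)
qed

lemma posp_plus_negp: "posp u n + negp u n = u n"
  by (simp add: posp_def negp_def)

lemma posp_negp_cases: "posp u n = u n \<and> negp u n = 0 \<or> posp u n = 0 \<and> negp u n = u n"
  by (auto simp: posp_def negp_def)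

lemma abs_posp_le: "\<bar>posp u n\<bar> \<le> \<bar>u n\<bar>" and abs_negp_le: "\<bar>negp u n\<bar> \<le> \<bar>u n\<bar>"
  by (auto simp: posp_def negp_def)

lemma split_by_sign:
  fixes f :: "real \<Rightarrow> real"
  shows "f 0 = 0 \<Longrightarrow> f (u n) = f (posp u n) + f (negp u n)"
  using posp_negp_cases[of u n] by auto

lemma posp_uminus: "posp (\<lambda>n. - u n) = (\<lambda>n. - negp u n)"
  and negp_uminus: "negp (\<lambda>n. - u n) = (\<lambda>n. - posp u n)"
  by (auto simp: posp_def negp_def)

lemma fdiff_scal: "fdiff (scal s u) n = s * fdiff u n"
  by (simp add: fdiff_def scal_def algebra_simps)

lemma fdiff_posp_plus_negp: "fdiff (posp u) n + fdiff (negp u) n = fdiff u n"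
  unfolding fdiff_def using posp_plus_negp[of u n] posp_plus_negp[of u "n + 1"] by linarith

lemma fdiff_posp_negp_same_sign: "0 \<le> fdiff (posp u) n * fdiff (negp u) n"
  by (auto simp: fdiff_def posp_def negp_def max_def min_def mult_nonneg_nonpos mult_nonpos_nonneg
      zero_le_mult_iff)

lemma abs_fdiff_posp_le: "\<bar>fdiff (posp u) n\<bar> \<le> \<bar>fdiff u n\<bar>"
  and abs_fdiff_negp_le: "\<bar>fdiff (negp u) n\<bar> \<le> \<bar>fdiff u n\<bar>"
  using fdiff_posp_negp_same_sign[of u n] fdiff_posp_plus_negp[of u n]
  by (auto simp: zero_le_mult_iff)

definition scal_pn :: "real \<Rightarrow> real \<Rightarrow> (int \<Rightarrow> real) \<Rightarrow> int \<Rightarrow> real" where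
  "scal_pn s t u = (\<lambda>n. s * posp u n + t * negp u n)"

lemma fdiff_scal_pn: "fdiff (scal_pn s t u) n = s * fdiff (posp u) n + t * fdiff (negp u) n"
  by (simp add: scal_pn_def fdiff_def algebra_simps)

lemma posp_scal_pn: "0 \<le> s \<Longrightarrow> 0 \<le> t \<Longrightarrow> posp (scal_pn s t u) = scal s (posp u)"
  and negp_scal_pn: "0 \<le> s \<Longrightarrow> 0 \<le> t \<Longrightarrow> negp (scal_pn s t u) = scal t (negp u)"
  by (auto simp: scal_pn_def scal_def posp_def negp_def max_def min_def mult_le_0_iff
      zero_le_mult_iff)

lemma scal_pn_same: "scal_pn s s u = scal s u"
  by (auto simp: scal_pn_def scal_def posp_plus_negp simp flip: distrib_left)

lemma scal_pn_1_1: "scal_pn 1 1 u = u"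
  by (rule ext) (simp add: scal_pn_same scal_def)

lemma scal_pn_uminus: "scal_pn t s (\<lambda>n. - u n) = (\<lambda>n. - scal_pn s t u n)"
  by (simp add: scal_pn_def posp_uminus negp_uminus algebra_simps)

lemma scal_eq_0_iff: "scal s u = (\<lambda>_. 0) \<longleftrightarrow> s = 0 \<or> u = (\<lambda>_. 0)"
  by (auto simp: scal_def fun_eq_iff)

lemma scal_1: "scal 1 u = u"
  by (rule ext) (simp add: scal_def)

lemma scal_scal: "scal s (scal t u) = scal (s * t) u"
  by (rule ext) (simp add: scal_def)

lemma Ifun_uminus: "Ifun a b c p q r (\<lambda>n. - u n) = Ifun a b c p q r u"
  by (simp add: Ifun_def normE_def fdiff_def abs_minus_commute)

lemma dIfun_uminus: "dIfun a b c p q r (\<lambda>n. - u n) (\<lambda>n. - v n) = dIfun a b c p q r u v"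
  by (simp add: dIfun_def fdiff_def abs_minus_commute algebra_simps)

lemma D_set_uminus: "(\<lambda>n. - u n) \<in> D_set a b c p q r \<longleftrightarrow> u \<in> D_set a b c p q r"
  by (simp add: D_set_def E_space_def fdiff_def abs_minus_commute)

locale discrete_log_problem =
  fixes p q r :: real and a b c :: "int \<Rightarrow> real" and N :: nat
  assumes p_eq_N: "p = real N" and even_N: "even N" and N_ge_2: "2 \<le> N"
    and p_less_q: "p < q" and r_pos: "0 < r"
    and a_pos: "\<And>n. 0 < a n" and b_pos: "\<And>n. 0 < b n" and c_pos: "\<And>n. 0 < c n"
    and b_bounded_below: "\<exists>b0>0. \<forall>n. b0 \<le> b n" and c_summable: "c summable_on UNIV"
begin

abbreviation "E \<equiv> E_space a b p"
abbreviation "D \<equiv> D_set a b c p q r"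
abbreviation "I \<equiv> Ifun a b c p q r"
abbreviation "dI \<equiv> dIfun a b c p q r"

lemma N_pos: "0 < N" and N_less_q: "real N < q" and p_pos: "0 < p" and q_pos: "0 < q"
  using N_ge_2 p_less_q p_eq_N by auto

lemma power_N_nonneg: "0 \<le> (x::real) ^ N"
  using even_N by (rule zero_le_even_power)

lemma power_N_abs: "\<bar>x::real\<bar> ^ N = x ^ N"
  using even_N by (rule power_even_abs)

lemma power_N_minus_1_mult: "(x::real) ^ (N - 1) * x = x ^ N"
  using N_pos by (simp add: power_eq_if[of x N])

lemma abs_powr_p: "\<bar>x\<bar> powr p = x ^ N"
  using N_pos by (simp add: p_eq_N powr_realpow' power_N_abs)

text \<open>The left factor \<open>k\<close> lets the next two lemmas rewrite the left-nested products of
  \<^const>\<open>dIfun\<close>.\<close>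

lemma mult_abs_powr_p_minus_2: "k * \<bar>x\<bar> powr (p - 2) * x = k * x ^ (N - 1)"
proof (cases "x = 0")
  case False
  have "p - 2 = real (N - 2)"
    using N_ge_2 by (simp add: p_eq_N)
  then have "\<bar>x\<bar> powr (p - 2) = x ^ (N - 2)"
    using False even_N by (simp add: powr_realpow power_even_abs)
  moreover have "x ^ (N - 2) * x = x ^ (N - 1)"
    using N_ge_2 by (simp add: power_Suc2[symmetric] Suc_diff_Suc numeral_2_eq_2)
  ultimately show ?thesis
    by (simp add: mult.assoc)
qed (use N_ge_2 in simp)

lemma mult_abs_powr_q_minus_2: "k * \<bar>x\<bar> powr (q - 2) * x * x = k * \<bar>x\<bar> powr q"
proof (cases "x = 0")
  case False
  have sq: "x * x = \<bar>x\<bar> powr 2"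
    using False by (simp add: powr_numeral power2_eq_square abs_mult_self_eq)
  have "\<bar>x\<bar> powr (q - 2) * \<bar>x\<bar> powr 2 = \<bar>x\<bar> powr q"
    by (simp only: powr_add[symmetric]) simp
  then show ?thesis
    using sq by (simp only: mult.assoc)
qed (use q_pos in simp)

definition grad_energy :: "(int \<Rightarrow> real) \<Rightarrow> real" where
  "grad_energy v = (\<Sum>\<^sub>\<infinity>n. a n * fdiff v n ^ N)"

definition grad_pair :: "(int \<Rightarrow> real) \<Rightarrow> (int \<Rightarrow> real) \<Rightarrow> real" where
  "grad_pair v w = (\<Sum>\<^sub>\<infinity>n. a n * fdiff v n ^ (N - 1) * fdiff w n)"

definition b_mass :: "(int \<Rightarrow> real) \<Rightarrow> real" where
  "b_mass v = (\<Sum>\<^sub>\<infinity>n. b n * v n ^ N)"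

definition c_mass :: "(int \<Rightarrow> real) \<Rightarrow> real" where
  "c_mass v = (\<Sum>\<^sub>\<infinity>n. c n * \<bar>v n\<bar> powr q)"

definition c_log :: "(int \<Rightarrow> real) \<Rightarrow> real" where
  "c_log v = (\<Sum>\<^sub>\<infinity>n. c n * \<bar>v n\<bar> powr q * ln (\<bar>v n\<bar> powr r))"

definition c_energy :: "(int \<Rightarrow> real) \<Rightarrow> real" where
  "c_energy v = r / q\<^sup>2 * c_mass v - c_log v / q"

lemma grad_energy_nonneg: "0 \<le> grad_energy v"
  unfolding grad_energy_def using a_pos
  by (intro infsum_nonneg mult_nonneg_nonneg power_N_nonneg) (simp add: less_imp_le)

lemma b_mass_nonneg: "0 \<le> b_mass v"
  unfolding b_mass_def using b_pos
  by (intro infsum_nonneg mult_nonneg_nonneg power_N_nonneg) (simp add: less_imp_le)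

lemma c_mass_nonneg: "0 \<le> c_mass v"
  unfolding c_mass_def using c_pos
  by (intro infsum_nonneg mult_nonneg_nonneg) (simp_all add: less_imp_le)

lemma E_space_iff: "v \<in> E \<longleftrightarrow> (\<lambda>n. a n * fdiff v n ^ N + b n * v n ^ N) summable_on UNIV"
  by (simp add: E_space_def abs_powr_p)

lemma E_space_summable_grad: "v \<in> E \<Longrightarrow> (\<lambda>n. a n * fdiff v n ^ N) summable_on UNIV"
  and E_space_summable_b: "v \<in> E \<Longrightarrow> (\<lambda>n. b n * v n ^ N) summable_on UNIV"
proof -
  have nonneg: "0 \<le> a n * fdiff v n ^ N" "0 \<le> b n * v n ^ N" for n
    using a_pos[of n] b_pos[of n] by (simp_all add: power_N_nonneg)
  assume "v \<in> E"
  then have "(\<lambda>n. a n * fdiff v n ^ N + b n * v n ^ N) summable_on UNIV"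
    by (simp add: E_space_iff)
  then show "(\<lambda>n. a n * fdiff v n ^ N) summable_on UNIV" "(\<lambda>n. b n * v n ^ N) summable_on UNIV"
    by (auto elim!: summable_on_comparison_test simp: nonneg)
qed

lemma E_space_dominated:
  assumes u: "u \<in> E" and C: "0 \<le> C"
    and dom: "\<And>n. \<bar>fdiff v n\<bar> \<le> C * \<bar>fdiff u n\<bar>" "\<And>n. \<bar>v n\<bar> \<le> C * \<bar>u n\<bar>"
  shows "v \<in> E"
  unfolding E_space_iff
proof (rule summable_on_comparison_test)
  show "(\<lambda>n. C ^ N * (a n * fdiff u n ^ N + b n * u n ^ N)) summable_on UNIV"
    using u by (intro summable_on_cmult_right) (simp add: E_space_iff)
  fix n
  have "fdiff v n ^ N \<le> C ^ N * fdiff u n ^ N" "v n ^ N \<le> C ^ N * u n ^ N"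
    using dom[of n] C
    by (simp_all flip: power_N_abs[of "fdiff v n"] power_N_abs[of "v n"] power_N_abs[of "fdiff u n"]
        power_N_abs[of "u n"] power_mult_distrib add: power_mono)
  then show "a n * fdiff v n ^ N + b n * v n ^ N \<le> C ^ N * (a n * fdiff u n ^ N + b n * u n ^ N)"
    using a_pos[of n] b_pos[of n] by (simp add: algebra_simps add_mono mult_left_mono)
  show "0 \<le> a n * fdiff v n ^ N + b n * v n ^ N"
    using a_pos[of n] b_pos[of n] by (simp add: power_N_nonneg)
qed

lemma posp_in_E: "v \<in> E \<Longrightarrow> posp v \<in> E"
  and negp_in_E: "v \<in> E \<Longrightarrow> negp v \<in> E"
  by (auto intro: E_space_dominated[where C = 1]
      simp: abs_fdiff_posp_le abs_fdiff_negp_le abs_posp_le abs_negp_le)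

lemma scal_in_E: "v \<in> E \<Longrightarrow> scal s v \<in> E"
  by (rule E_space_dominated[where C = "\<bar>s\<bar>"]) (auto simp: fdiff_scal scal_def abs_mult)

lemma scal_pn_in_E:
  assumes "u \<in> E" "0 \<le> s" "0 \<le> t"
  shows "scal_pn s t u \<in> E"
proof (rule E_space_dominated[OF assms(1), where C = "s + t"])
  fix n
  have "\<bar>s * fdiff (posp u) n + t * fdiff (negp u) n\<bar> \<le> s * \<bar>fdiff u n\<bar> + t * \<bar>fdiff u n\<bar>"
    using abs_fdiff_posp_le[of u n] abs_fdiff_negp_le[of u n] assms(2,3)
    by (intro order.trans[OF abs_triangle_ineq] add_mono) (auto simp: abs_mult mult_left_mono)
  then show "\<bar>fdiff (scal_pn s t u) n\<bar> \<le> (s + t) * \<bar>fdiff u n\<bar>"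
    by (simp add: fdiff_scal_pn distrib_right)
  show "\<bar>scal_pn s t u n\<bar> \<le> (s + t) * \<bar>u n\<bar>"
    using posp_negp_cases[of u n] assms(2,3) by (auto simp: scal_pn_def abs_mult distrib_right)
qed (use assms in simp)

lemma E_space_bounded:
  assumes "v \<in> E"
  obtains M where "\<And>n. \<bar>v n\<bar> \<le> M"
proof -
  obtain b0 where b0: "0 < b0" "\<And>n. b0 \<le> b n"
    using b_bounded_below by auto
  have le: "b n * v n ^ N \<le> b_mass v" for n
    using finite_sum_le_infsum[OF E_space_summable_b[OF assms], of "{n}"] b_pos
    by (simp add: b_mass_def less_imp_le power_N_nonneg)
  have "\<bar>v n\<bar> \<le> max 1 (b_mass v / b0)" for n
  proof (cases "\<bar>v n\<bar> \<le> 1")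
    case False
    then have "\<bar>v n\<bar> \<le> v n ^ N"
      using N_pos power_increasing[of 1 N "\<bar>v n\<bar>"] by (simp add: power_N_abs)
    also have "\<dots> \<le> b n * v n ^ N / b0"
      using b0 by (simp add: field_simps mult_right_mono power_N_nonneg)
    also have "\<dots> \<le> b_mass v / b0"
      using le[of n] b0(1) by (simp add: divide_right_mono)
    finally show ?thesis
      by simp
  qed simp
  then show thesis
    using that by blast
qed

lemma summable_c_mass:
  assumes "v \<in> E"
  shows "(\<lambda>n. c n * \<bar>v n\<bar> powr q) summable_on UNIV"
proof -
  obtain M where M: "\<And>n. \<bar>v n\<bar> \<le> M"
    using E_space_bounded[OF assms] by metis
  show ?thesis
  proof (rule summable_on_real_dominated[OF summable_on_cmult_right[OF c_summable]])
    fix n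
    have "\<bar>v n\<bar> powr q \<le> M powr q"
      using M[of n] q_pos by (intro powr_mono2) auto
    then show "\<bar>c n * \<bar>v n\<bar> powr q\<bar> \<le> \<bar>M powr q * c n\<bar>"
      using c_pos[of n] by (simp add: abs_mult mult.commute mult_right_mono)
  qed
qed

lemma summable_grad_pair:
  assumes "v \<in> E" "w \<in> E"
  shows "(\<lambda>n. a n * fdiff v n ^ (N - 1) * fdiff w n) summable_on UNIV"
proof (rule summable_on_real_dominated)
  show "(\<lambda>n. a n * fdiff v n ^ N + a n * fdiff w n ^ N) summable_on UNIV"
    using assms by (intro summable_on_add E_space_summable_grad)
  fix n
  have "\<bar>fdiff v n ^ (N - 1) * fdiff w n\<bar> \<le> fdiff v n ^ N + fdiff w n ^ N"
    using abs_power_pred_mult_le[OF N_pos] by (simp add: power_N_abs)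
  then show "\<bar>a n * fdiff v n ^ (N - 1) * fdiff w n\<bar> \<le> \<bar>a n * fdiff v n ^ N + a n * fdiff w n ^ N\<bar>"
    using a_pos[of n] by (simp add: abs_mult mult.assoc distrib_left[symmetric] mult_left_mono power_N_nonneg)
qed

lemma D_set_iff: "v \<in> D \<longleftrightarrow> v \<in> E \<and> (\<lambda>n. c n * \<bar>v n\<bar> powr q * ln (\<bar>v n\<bar> powr r)) summable_on UNIV"
  by (simp add: D_set_def)

lemma posp_in_D: "v \<in> D \<Longrightarrow> posp v \<in> D"
  and negp_in_D: "v \<in> D \<Longrightarrow> negp v \<in> D"
proof -
  assume v: "v \<in> D"
  then have log: "(\<lambda>n. c n * \<bar>v n\<bar> powr q * ln (\<bar>v n\<bar> powr r)) summable_on UNIV"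
    by (simp add: D_set_iff)
  have "(\<lambda>n. c n * \<bar>w n\<bar> powr q * ln (\<bar>w n\<bar> powr r)) summable_on UNIV"
    if "w = posp v \<or> w = negp v" for w
  proof (rule summable_on_real_dominated[OF log])
    fix n
    show "\<bar>c n * \<bar>w n\<bar> powr q * ln (\<bar>w n\<bar> powr r)\<bar> \<le> \<bar>c n * \<bar>v n\<bar> powr q * ln (\<bar>v n\<bar> powr r)\<bar>"
      using that posp_negp_cases[of v n] by auto
  qed
  then show "posp v \<in> D" "negp v \<in> D"
    using v by (auto simp: D_set_iff intro: posp_in_E negp_in_E)
qed

lemma in_D_if_parts:
  assumes "v \<in> E" "posp v \<in> D" "negp v \<in> D"
  shows "v \<in> D"
proof -
  have "(\<lambda>n. c n * \<bar>posp v n\<bar> powr q * ln (\<bar>posp v n\<bar> powr r)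
      + c n * \<bar>negp v n\<bar> powr q * ln (\<bar>negp v n\<bar> powr r)) summable_on UNIV"
    using assms(2,3) by (intro summable_on_add) (auto simp: D_set_iff)
  moreover have "c n * \<bar>v n\<bar> powr q * ln (\<bar>v n\<bar> powr r)
      = c n * \<bar>posp v n\<bar> powr q * ln (\<bar>posp v n\<bar> powr r)
        + c n * \<bar>negp v n\<bar> powr q * ln (\<bar>negp v n\<bar> powr r)" for n
    by (rule split_by_sign) simp
  ultimately show ?thesis
    using assms(1) by (simp add: D_set_iff)
qed

lemma c_log_term_scal:
  "0 \<le> s \<Longrightarrow> c n * \<bar>scal s w n\<bar> powr q * ln (\<bar>scal s w n\<bar> powr r)
    = s powr q * (c n * \<bar>w n\<bar> powr q * ln (\<bar>w n\<bar> powr r)) + r * ln s * s powr q * (c n * \<bar>w n\<bar> powr q)"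
  using abs_powr_ln_powr_scale[of s "w n" q r] by (simp add: scal_def algebra_simps)

lemma scal_in_D:
  assumes "w \<in> D" "0 \<le> s"
  shows "scal s w \<in> D"
proof -
  have "(\<lambda>n. s powr q * (c n * \<bar>w n\<bar> powr q * ln (\<bar>w n\<bar> powr r))
      + r * ln s * s powr q * (c n * \<bar>w n\<bar> powr q)) summable_on UNIV"
    using assms(1) unfolding D_set_iff
    by (intro summable_on_add summable_on_cmult_right summable_c_mass) auto
  then show ?thesis
    using assms scal_in_E unfolding D_set_iff c_log_term_scal[OF assms(2)] by blast
qed

lemma scal_pn_in_D:
  assumes "u \<in> D" "0 \<le> s" "0 \<le> t"
  shows "scal_pn s t u \<in> D"
proof (rule in_D_if_parts)
  show "scal_pn s t u \<in> E"
    using assms by (intro scal_pn_in_E) (auto simp: D_set_iff)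
  show "posp (scal_pn s t u) \<in> D" "negp (scal_pn s t u) \<in> D"
    using assms by (simp_all add: posp_scal_pn negp_scal_pn scal_in_D posp_in_D negp_in_D)
qed

lemma b_mass_split:
  assumes "v \<in> E"
  shows "b_mass v = b_mass (posp v) + b_mass (negp v)"
proof -
  have "b n * v n ^ N = b n * posp v n ^ N + b n * negp v n ^ N" for n
    by (rule split_by_sign[where f = "\<lambda>x. b n * x ^ N"]) (simp add: N_pos)
  then show ?thesis
    using assms unfolding b_mass_def
    by (simp add: infsum_add E_space_summable_b posp_in_E negp_in_E)
qed

lemma c_mass_split:
  assumes "v \<in> E"
  shows "c_mass v = c_mass (posp v) + c_mass (negp v)"
proof -
  have "c n * \<bar>v n\<bar> powr q = c n * \<bar>posp v n\<bar> powr q + c n * \<bar>negp v n\<bar> powr q" for n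
    by (rule split_by_sign[where f = "\<lambda>x. c n * \<bar>x\<bar> powr q"]) simp
  then show ?thesis
    using assms unfolding c_mass_def
    by (simp add: infsum_add summable_c_mass posp_in_E negp_in_E)
qed

lemma c_log_split:
  assumes "v \<in> D"
  shows "c_log v = c_log (posp v) + c_log (negp v)"
proof -
  have "c n * \<bar>v n\<bar> powr q * ln (\<bar>v n\<bar> powr r)
      = c n * \<bar>posp v n\<bar> powr q * ln (\<bar>posp v n\<bar> powr r)
        + c n * \<bar>negp v n\<bar> powr q * ln (\<bar>negp v n\<bar> powr r)" for n
    by (rule split_by_sign) simp
  moreover have "(\<lambda>n. c n * \<bar>w n\<bar> powr q * ln (\<bar>w n\<bar> powr r)) summable_on UNIV"
    if "w = posp v \<or> w = negp v" for w
    using that assms posp_in_D negp_in_D unfolding D_set_iff by blast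
  ultimately show ?thesis
    unfolding c_log_def by (simp add: infsum_add)
qed

lemma c_energy_split: "v \<in> D \<Longrightarrow> c_energy v = c_energy (posp v) + c_energy (negp v)"
  by (simp add: c_energy_def c_mass_split c_log_split D_set_iff algebra_simps add_divide_distrib)

lemma grad_energy_scal: "grad_energy (scal s v) = s ^ N * grad_energy v"
  unfolding grad_energy_def fdiff_scal power_mult_distrib
  by (subst infsum_cmult_right'[symmetric]) (simp add: mult_ac)

lemma b_mass_scal: "b_mass (scal s v) = s ^ N * b_mass v"
  unfolding b_mass_def scal_def power_mult_distrib
  by (subst infsum_cmult_right'[symmetric]) (simp add: mult_ac)

lemma c_mass_scal: "0 \<le> s \<Longrightarrow> c_mass (scal s v) = s powr q * c_mass v"
  unfolding c_mass_def scal_def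
  by (subst infsum_cmult_right'[symmetric]) (simp add: abs_mult powr_mult mult_ac)

lemma grad_pair_scal_right: "grad_pair v (scal k w) = k * grad_pair v w"
  unfolding grad_pair_def fdiff_scal
  by (subst infsum_cmult_right'[symmetric]) (simp add: mult_ac)

lemma c_log_scal:
  assumes "w \<in> D" "0 \<le> s"
  shows "c_log (scal s w) = s powr q * (c_log w + r * ln s * c_mass w)"
proof -
  have "c_log (scal s w) = s powr q * c_log w + r * ln s * s powr q * c_mass w"
    using assms unfolding c_log_def c_mass_def c_log_term_scal[OF assms(2)]
    by (simp add: infsum_add infsum_cmult_right' summable_on_cmult_right summable_c_mass D_set_iff)
  then show ?thesis
    by (simp add: algebra_simps)
qed

lemma c_energy_scal:
  assumes "w \<in> D" "0 \<le> s"
  shows "c_energy (scal s w)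
    = (r / q\<^sup>2 * c_mass w - c_log w / q) * s powr q - r / q * c_mass w * s powr q * ln s"
  using q_pos
  by (simp add: c_energy_def c_mass_scal c_log_scal assms power2_eq_square field_simps)

lemma normE_powr_p:
  assumes "v \<in> E"
  shows "normE a b p v powr p = grad_energy v + b_mass v"
proof -
  have "(\<Sum>\<^sub>\<infinity>n. a n * \<bar>fdiff v n\<bar> powr p + b n * \<bar>v n\<bar> powr p) = grad_energy v + b_mass v"
    using assms unfolding abs_powr_p grad_energy_def b_mass_def
    by (simp add: infsum_add E_space_summable_grad E_space_summable_b)
  moreover have "0 \<le> grad_energy v + b_mass v"
    using grad_energy_nonneg b_mass_nonneg by (rule add_nonneg_nonneg)
  ultimately show ?thesis
    using p_pos by (simp add: normE_def powr_powr)
qed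

lemma Ifun_eq: "v \<in> E \<Longrightarrow> I v = (grad_energy v + b_mass v) / p + c_energy v"
  by (simp add: Ifun_def normE_powr_p c_energy_def c_mass_def c_log_def)

lemma dIfun_sign_part:
  assumes "v \<in> D" "w \<in> E" "\<And>n. w n = 0 \<or> w n = v n"
  shows "dI v w = grad_pair v w + b_mass w - c_log w"
proof -
  have b: "b n * v n ^ (N - 1) * w n = b n * w n ^ N" for n
    using assms(3)[of n]
  proof
    assume "w n = v n"
    then show ?thesis
      by (simp only: mult.assoc power_N_minus_1_mult)
  qed (use N_pos in simp)
  have c: "c n * \<bar>v n\<bar> powr (q - 2) * v n * w n * ln (\<bar>v n\<bar> powr r)
      = c n * \<bar>w n\<bar> powr q * ln (\<bar>w n\<bar> powr r)" for n
    using assms(3)[of n]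
  proof
    assume "w n = v n"
    then show ?thesis
      unfolding \<open>w n = v n\<close> mult_abs_powr_q_minus_2 by simp
  qed (use q_pos in simp)
  have "(\<Sum>\<^sub>\<infinity>n. a n * \<bar>fdiff v n\<bar> powr (p - 2) * fdiff v n * fdiff w n
      + b n * \<bar>v n\<bar> powr (p - 2) * v n * w n) = grad_pair v w + b_mass w"
    using assms(1,2) unfolding mult_abs_powr_p_minus_2 b grad_pair_def b_mass_def
    by (intro infsum_add summable_grad_pair E_space_summable_b) (auto simp: D_set_iff)
  then show ?thesis
    unfolding dIfun_def c c_log_def by simp
qed

lemma dIfun_self:
  assumes "v \<in> D"
  shows "dI v v = grad_energy v + b_mass v - c_log v"
proof -
  have "grad_pair v v = grad_energy v"
    unfolding grad_pair_def grad_energy_def mult.assoc power_N_minus_1_mult ..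
  then show ?thesis
    using dIfun_sign_part[OF assms] assms by (simp add: D_set_iff)
qed

lemma dIfun_posp: "v \<in> D \<Longrightarrow> dI v (posp v) = grad_pair v (posp v) + b_mass (posp v) - c_log (posp v)"
  and dIfun_negp: "v \<in> D \<Longrightarrow> dI v (negp v) = grad_pair v (negp v) + b_mass (negp v) - c_log (negp v)"
  using posp_negp_cases[of v]
  by (auto intro!: dIfun_sign_part intro: posp_in_E negp_in_E simp: D_set_iff)

section \<open>Points of the Nehari sets maximise \<open>I\<close> on their fibres\<close>

lemma c_energy_scal_le:
  assumes "w \<in> D" "0 \<le> s"
  shows "c_energy (scal s w) \<le> c_energy w + (1 - s powr q) / q * c_log w"
proof -
  have "s powr q - 1 \<le> q * (s powr q * ln s)"
  proof (cases "s = 0")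
    case False
    then show ?thesis
      using minus_one_le_mult_ln[of "s powr q"] assms(2) by (simp add: ln_powr algebra_simps)
  qed simp
  then have "0 \<le> r / q\<^sup>2 * c_mass w * (1 - s powr q + q * (s powr q * ln s))"
    using r_pos c_mass_nonneg by (intro mult_nonneg_nonneg) auto
  also have "\<dots> = c_energy w + (1 - s powr q) / q * c_log w - c_energy (scal s w)"
    using q_pos unfolding c_energy_scal[OF assms] unfolding c_energy_def
    by (simp add: power2_eq_square field_simps)
  finally show ?thesis
    by simp
qed

lemma Ifun_scal:
  "v \<in> D \<Longrightarrow> I (scal s v) = s ^ N * (grad_energy v + b_mass v) / p + c_energy (scal s v)"
  by (simp add: Ifun_eq scal_in_E D_set_iff grad_energy_scal b_mass_scal algebra_simps)

lemma dIfun_scal_self: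
  "v \<in> D \<Longrightarrow> 0 \<le> s \<Longrightarrow> dI (scal s v) (scal s v)
    = s ^ N * (grad_energy v + b_mass v) - s powr q * (c_log v + r * ln s * c_mass v)"
  by (simp add: dIfun_self scal_in_D grad_energy_scal b_mass_scal c_log_scal algebra_simps)

lemma Nehari_point_is_ray_max:
  assumes v: "v \<in> D" "dI v v = 0" and s: "0 \<le> s"
  shows "I (scal s v) \<le> I v"
proof -
  define A where "A = grad_energy v + b_mass v"
  have "A * (s ^ N / N + (1 - s powr q) / q) \<le> A * (1 / N)"
    using N_pos N_less_q s
    by (intro mult_left_mono power_div_plus_one_minus_powr_div_le)
       (simp_all add: A_def add_nonneg_nonneg grad_energy_nonneg b_mass_nonneg)
  then have "s ^ N * A / N + (1 - s powr q) / q * A \<le> A / N"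
    by (simp add: algebra_simps)
  moreover have "c_log v = A"
    using v by (simp add: A_def dIfun_self)
  then have "c_energy (scal s v) \<le> c_energy v + (1 - s powr q) / q * A"
    using c_energy_scal_le[OF v(1) s] by simp
  moreover have "I (scal s v) = s ^ N * A / N + c_energy (scal s v)"
    using Ifun_scal[OF v(1)] by (simp add: A_def p_eq_N)
  moreover have "I v = A / N + c_energy v"
    using Ifun_scal[OF v(1), of 1] by (simp add: A_def p_eq_N scal_1)
  ultimately show ?thesis
    by linarith
qed

lemma Ifun_scal_pn:
  assumes "u \<in> D" "0 \<le> s" "0 \<le> t"
  shows "I (scal_pn s t u) = (grad_energy (scal_pn s t u) + s ^ N * b_mass (posp u) + t ^ N * b_mass (negp u)) / p
    + c_energy (scal s (posp u)) + c_energy (scal t (negp u))"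
proof -
  have "scal_pn s t u \<in> D"
    using assms by (rule scal_pn_in_D)
  then show ?thesis
    using assms
    by (simp add: Ifun_eq D_set_iff b_mass_split c_energy_split posp_scal_pn negp_scal_pn
        b_mass_scal add.assoc)
qed

lemma grad_energy_scal_pn_nodal_bound:
  assumes v: "v \<in> E" and st: "0 \<le> s" "0 \<le> t"
  shows "grad_energy (scal_pn s t v) / N + (1 - s powr q) / q * grad_pair v (posp v)
    + (1 - t powr q) / q * grad_pair v (negp v) \<le> grad_energy v / N"
proof -
  let ?G = "\<lambda>w n. a n * fdiff v n ^ (N - 1) * fdiff w n"
  have "((\<lambda>n. 1 / N * (a n * fdiff (scal_pn s t v) n ^ N) + (1 - s powr q) / q * ?G (posp v) n
      + (1 - t powr q) / q * ?G (negp v) n) has_sum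
      (1 / N * grad_energy (scal_pn s t v) + (1 - s powr q) / q * grad_pair v (posp v)
      + (1 - t powr q) / q * grad_pair v (negp v))) UNIV"
    unfolding grad_energy_def grad_pair_def using v st
    by (intro has_sum_add has_sum_cmult_right has_sum_infsum E_space_summable_grad scal_pn_in_E
        summable_grad_pair posp_in_E negp_in_E)
  moreover have "((\<lambda>n. 1 / N * (a n * fdiff v n ^ N)) has_sum (1 / N * grad_energy v)) UNIV"
    unfolding grad_energy_def using v by (intro has_sum_cmult_right has_sum_infsum E_space_summable_grad)
  moreover have "1 / N * (a n * fdiff (scal_pn s t v) n ^ N) + (1 - s powr q) / q * ?G (posp v) n
      + (1 - t powr q) / q * ?G (negp v) n \<le> 1 / N * (a n * fdiff v n ^ N)" for n
  proof -
    have "(1 - s powr q) / q * (fdiff v n ^ (N - 1) * fdiff (posp v) n)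
        + (1 - t powr q) / q * (fdiff v n ^ (N - 1) * fdiff (negp v) n)
        \<le> (fdiff v n ^ N - fdiff (scal_pn s t v) n ^ N) / N"
      using nodal_pointwise_ineq[OF even_N N_pos less_imp_le[OF N_less_q] st
          fdiff_posp_negp_same_sign[of v n]]
      by (simp add: fdiff_posp_plus_negp fdiff_scal_pn)
    then have "a n * ((1 - s powr q) / q * (fdiff v n ^ (N - 1) * fdiff (posp v) n)
        + (1 - t powr q) / q * (fdiff v n ^ (N - 1) * fdiff (negp v) n))
        \<le> a n * ((fdiff v n ^ N - fdiff (scal_pn s t v) n ^ N) / N)"
      using a_pos[of n] by (intro mult_left_mono) auto
    then show ?thesis
      by (simp add: algebra_simps diff_divide_distrib)
  qed
  ultimately show ?thesis
    by (simp add: has_sum_mono)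
qed

lemma nodal_point_is_quadrant_max:
  assumes v: "v \<in> D" "dI v (posp v) = 0" "dI v (negp v) = 0" and st: "0 \<le> s" "0 \<le> t"
  shows "I (scal_pn s t v) \<le> I v"
proof -
  define \<sigma> \<tau> where "\<sigma> = (1 - s powr q) / q" and "\<tau> = (1 - t powr q) / q"
  have Lp: "c_log (posp v) = grad_pair v (posp v) + b_mass (posp v)"
    and Ln: "c_log (negp v) = grad_pair v (negp v) + b_mass (negp v)"
    using v by (simp_all add: dIfun_posp dIfun_negp)
  have grad: "grad_energy (scal_pn s t v) / N + \<sigma> * grad_pair v (posp v) + \<tau> * grad_pair v (negp v)
      \<le> grad_energy v / N"
    using grad_energy_scal_pn_nodal_bound[OF _ st] v(1) by (simp add: \<sigma>_def \<tau>_def D_set_iff)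
  have "c_energy (scal s (posp v)) \<le> c_energy (posp v) + \<sigma> * (grad_pair v (posp v) + b_mass (posp v))"
    "c_energy (scal t (negp v)) \<le> c_energy (negp v) + \<tau> * (grad_pair v (negp v) + b_mass (negp v))"
    using c_energy_scal_le[OF posp_in_D[OF v(1)] st(1)] c_energy_scal_le[OF negp_in_D[OF v(1)] st(2)]
    by (simp_all only: \<sigma>_def \<tau>_def Lp Ln)
  then have cp: "c_energy (scal s (posp v)) \<le> c_energy (posp v) + \<sigma> * grad_pair v (posp v) + \<sigma> * b_mass (posp v)"
    and cn: "c_energy (scal t (negp v)) \<le> c_energy (negp v) + \<tau> * grad_pair v (negp v) + \<tau> * b_mass (negp v)"
    by (simp_all add: distrib_left)
  have "b_mass (posp v) * (s ^ N / N + \<sigma>) \<le> b_mass (posp v) * (1 / N)"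
    "b_mass (negp v) * (t ^ N / N + \<tau>) \<le> b_mass (negp v) * (1 / N)"
    unfolding \<sigma>_def \<tau>_def using N_pos N_less_q st b_mass_nonneg
    by (intro mult_left_mono power_div_plus_one_minus_powr_div_le; simp)+
  then have bp: "s ^ N * b_mass (posp v) / N + \<sigma> * b_mass (posp v) \<le> b_mass (posp v) / N"
    and bn: "t ^ N * b_mass (negp v) / N + \<tau> * b_mass (negp v) \<le> b_mass (negp v) / N"
    by (simp_all add: algebra_simps)
  have "I (scal_pn s t v) = grad_energy (scal_pn s t v) / N + s ^ N * b_mass (posp v) / N
      + t ^ N * b_mass (negp v) / N + c_energy (scal s (posp v)) + c_energy (scal t (negp v))"
    using Ifun_scal_pn[OF v(1) st] by (simp add: p_eq_N add_divide_distrib)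
  moreover have "I v = grad_energy v / N + b_mass (posp v) / N + b_mass (negp v) / N
      + c_energy (posp v) + c_energy (negp v)"
    using Ifun_scal_pn[OF v(1), of 1 1] by (simp add: scal_pn_1_1 scal_1 p_eq_N add_divide_distrib)
  ultimately show ?thesis
    using grad cp cn bp bn by linarith
qed

section \<open>Every fibre meets the Nehari sets\<close>

lemma b_mass_pos:
  assumes "v \<in> E" "v \<noteq> (\<lambda>_. 0)"
  shows "0 < b_mass v"
proof -
  obtain k where "v k \<noteq> 0"
    using assms(2) by auto
  then have "0 < b k * v k ^ N"
    using b_pos[of k] even_N N_pos by (simp add: zero_less_power_eq)
  then show ?thesis
    unfolding b_mass_def using E_space_summable_b[OF assms(1)] b_pos
    by (intro infsum_pos_if_pos_term) (auto simp: less_imp_le power_N_nonneg)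
qed

lemma c_mass_pos:
  assumes "v \<in> E" "v \<noteq> (\<lambda>_. 0)"
  shows "0 < c_mass v"
proof -
  obtain k where "v k \<noteq> 0"
    using assms(2) by auto
  then have "0 < c k * \<bar>v k\<bar> powr q"
    using c_pos[of k] by simp
  then show ?thesis
    unfolding c_mass_def using summable_c_mass[OF assms(1)] c_pos
    by (intro infsum_pos_if_pos_term) (auto simp: less_imp_le)
qed

lemma Nehari_point_on_ray:
  assumes u: "u \<in> D" "u \<noteq> (\<lambda>_. 0)"
  obtains t0 where "0 < t0" "dI (scal t0 u) (scal t0 u) = 0"
proof -
  define g where "g t = (grad_energy u + b_mass u) * t ^ N + (- c_log u) * t powr q
    - r * c_mass u * t powr q * ln t" for t
  have E: "u \<in> E"
    using u(1) by (simp add: D_set_iff)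
  have X: "0 < grad_energy u + b_mass u" and Z: "0 < r * c_mass u"
    using b_mass_pos[OF E u(2)] c_mass_pos[OF E u(2)] grad_energy_nonneg[of u] r_pos by auto
  have g: "dI (scal t u) (scal t u) = g t" if "0 \<le> t" for t
    using dIfun_scal_self[OF u(1) that] by (simp add: g_def algebra_simps)
  obtain e where e: "0 < e" "0 < g e"
    using log_profile_pos_near_0[OF X N_less_q] unfolding g_def by blast
  obtain R where R: "e \<le> R" "g R < 0"
  proof -
    have "eventually (\<lambda>t. g t < 0) at_top"
      using log_profile_tendsto_at_bot[OF Z N_less_q] unfolding g_def filterlim_at_bot_dense by blast
    then obtain R where "\<And>t. R \<le> t \<Longrightarrow> g t < 0"
      unfolding eventually_at_top_linorder by blast
    then show thesis
      using that[of "max e R"] by simp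
  qed
  have "continuous_on {e..R} g"
    unfolding g_def using e(1)
    by (intro continuous_on_subset[OF continuous_on_log_profile[OF q_pos]]) auto
  then obtain t0 where "e \<le> t0" "g t0 = 0"
    using IVT2'[of g R 0 e] R e(2) by force
  then show thesis
    using that[of t0] e(1) g[of t0] by simp
qed

lemma ray_attains_max_on_Nehari:
  assumes u: "u \<in> D" "u \<noteq> (\<lambda>_. 0)"
  obtains t0 where "0 < t0" "scal t0 u \<in> Nehari a b c p q r"
    "\<And>s. 0 \<le> s \<Longrightarrow> I (scal s u) \<le> I (scal t0 u)"
proof -
  obtain t0 where t0: "0 < t0" "dI (scal t0 u) (scal t0 u) = 0"
    using Nehari_point_on_ray[OF u] by blast
  have v: "scal t0 u \<in> D" "scal t0 u \<noteq> (\<lambda>_. 0)"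
    using u t0(1) by (simp_all add: scal_in_D scal_eq_0_iff)
  have "I (scal s u) \<le> I (scal t0 u)" if "0 \<le> s" for s
    using Nehari_point_is_ray_max[OF v(1) t0(2), of "s / t0"] that t0(1) by (simp add: scal_scal)
  then show thesis
    using that t0 v by (simp add: Nehari_def)
qed

lemma grad_energy_scal_pn_mono:
  assumes "u \<in> E" "0 \<le> s" "s \<le> s'" "0 \<le> t" "t \<le> t'"
  shows "grad_energy (scal_pn s t u) \<le> grad_energy (scal_pn s' t' u)"
  unfolding grad_energy_def
proof (rule infsum_mono)
  show "(\<lambda>n. a n * fdiff (scal_pn s t u) n ^ N) summable_on UNIV"
    "(\<lambda>n. a n * fdiff (scal_pn s' t' u) n ^ N) summable_on UNIV"
    using assms by (auto intro!: E_space_summable_grad scal_pn_in_E)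
  fix n
  have "\<bar>fdiff (scal_pn s t u) n\<bar> ^ N \<le> \<bar>fdiff (scal_pn s' t' u) n\<bar> ^ N"
    unfolding fdiff_scal_pn
    by (intro power_mono abs_lincomb_mono fdiff_posp_negp_same_sign) (use assms in auto)
  then show "a n * fdiff (scal_pn s t u) n ^ N \<le> a n * fdiff (scal_pn s' t' u) n ^ N"
    using a_pos[of n] by (simp add: power_N_abs)
qed

lemma grad_energy_scal_pn_le:
  assumes "u \<in> E" "0 \<le> s" "0 \<le> t"
  shows "grad_energy (scal_pn s t u) \<le> (s ^ N + t ^ N) * grad_energy u"
proof -
  have "grad_energy (scal_pn s t u) \<le> grad_energy (scal_pn (max s t) (max s t) u)"
    using assms by (intro grad_energy_scal_pn_mono) auto
  also have "\<dots> = max s t ^ N * grad_energy u"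
    by (simp add: scal_pn_same grad_energy_scal)
  also have "\<dots> \<le> (s ^ N + t ^ N) * grad_energy u"
    using assms by (intro mult_right_mono grad_energy_nonneg) (auto simp: max_def)
  finally show ?thesis .
qed

lemma grad_energy_above_tangent:
  assumes "v \<in> E" "h \<in> E" "w \<in> E" "\<And>n. fdiff w n = fdiff v n + fdiff h n"
  shows "grad_energy v + N * grad_pair v h \<le> grad_energy w"
proof (rule has_sum_mono)
  show "((\<lambda>n. a n * fdiff v n ^ N + N * (a n * fdiff v n ^ (N - 1) * fdiff h n))
      has_sum (grad_energy v + N * grad_pair v h)) UNIV"
    unfolding grad_energy_def grad_pair_def using assms
    by (intro has_sum_add has_sum_cmult_right has_sum_infsum E_space_summable_grad summable_grad_pair)
  show "((\<lambda>n. a n * fdiff w n ^ N) has_sum grad_energy w) UNIV"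
    unfolding grad_energy_def using assms by (intro has_sum_infsum E_space_summable_grad)
  fix n
  have "fdiff v n ^ N + N * fdiff v n ^ (N - 1) * fdiff h n \<le> fdiff w n ^ N"
    using power_even_above_tangent[OF even_N, of "fdiff v n" "fdiff w n"] assms(4) by simp
  then have "a n * (fdiff v n ^ N + N * fdiff v n ^ (N - 1) * fdiff h n) \<le> a n * fdiff w n ^ N"
    using a_pos[of n] by (intro mult_left_mono) auto
  then show "a n * fdiff v n ^ N + N * (a n * fdiff v n ^ (N - 1) * fdiff h n) \<le> a n * fdiff w n ^ N"
    by (simp add: algebra_simps)
qed

lemma continuous_grad_energy_scal_pn:
  assumes "u \<in> E"
  shows "continuous_on S (\<lambda>z. grad_energy (scal_pn (fst z) (snd z) u))"
proof -
  define Q where "Q k = (\<Sum>\<^sub>\<infinity>n. a n * (fdiff (posp u) n ^ k * fdiff (negp u) n ^ (N - k)))" for k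
  have summable: "(\<lambda>n. a n * (fdiff (posp u) n ^ k * fdiff (negp u) n ^ (N - k))) summable_on UNIV"
    if "k \<le> N" for k
  proof (rule summable_on_real_dominated[OF E_space_summable_grad[OF assms]])
    fix n
    have "\<bar>fdiff (posp u) n ^ k * fdiff (negp u) n ^ (N - k)\<bar> \<le> \<bar>fdiff u n\<bar> ^ k * \<bar>fdiff u n\<bar> ^ (N - k)"
      unfolding abs_mult power_abs
      by (intro mult_mono power_mono abs_fdiff_posp_le abs_fdiff_negp_le) auto
    also have "\<dots> = fdiff u n ^ N"
      using that by (simp add: power_N_abs flip: power_add)
    finally show "\<bar>a n * (fdiff (posp u) n ^ k * fdiff (negp u) n ^ (N - k))\<bar> \<le> \<bar>a n * fdiff u n ^ N\<bar>"
      using a_pos[of n] by (simp add: abs_mult mult_left_mono power_N_nonneg)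
  qed
  have "grad_energy (scal_pn s t u) = (\<Sum>k\<le>N. of_nat (N choose k) * s ^ k * t ^ (N - k) * Q k)" for s t
  proof -
    have "grad_energy (scal_pn s t u) = (\<Sum>\<^sub>\<infinity>n. \<Sum>k\<le>N. of_nat (N choose k) * s ^ k * t ^ (N - k)
        * (a n * (fdiff (posp u) n ^ k * fdiff (negp u) n ^ (N - k))))"
      unfolding grad_energy_def fdiff_scal_pn binomial_ring sum_distrib_left
      by (intro infsum_cong sum.cong) (simp_all add: power_mult_distrib mult_ac)
    also have "\<dots> = (\<Sum>k\<le>N. of_nat (N choose k) * s ^ k * t ^ (N - k) * Q k)"
      by (subst infsum_sum_finite) (auto simp: Q_def infsum_cmult_right' intro!: summable_on_cmult_right summable)
    finally show ?thesis .
  qed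
  note expand = this
  show ?thesis
    unfolding expand by (intro continuous_intros)
qed

lemma c_energy_scal_profile:
  assumes "w \<in> D" "w \<noteq> (\<lambda>_. 0)"
  obtains Y Z where "0 < Z" "\<And>s. 0 \<le> s \<Longrightarrow> c_energy (scal s w) = Y * s powr q - Z * s powr q * ln s"
proof -
  have "0 < r / q * c_mass w"
    using assms r_pos q_pos c_mass_pos by (simp add: D_set_iff)
  then show thesis
    using that[where Y = "r / q\<^sup>2 * c_mass w - c_log w / q" and Z = "r / q * c_mass w"]
      c_energy_scal[OF assms(1)] by blast
qed

lemma continuous_Ifun_scal_pn:
  assumes "u \<in> D"
  shows "continuous_on ({0..} \<times> {0..}) (\<lambda>z. I (scal_pn (fst z) (snd z) u))"
proof -
  define prof where "prof w s = 0 * s ^ N + (r / q\<^sup>2 * c_mass w - c_log w / q) * s powr q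
    - r / q * c_mass w * s powr q * ln s" for w s
  have cont: "continuous_on {0..} (prof w)" for w
    unfolding prof_def by (rule continuous_on_log_profile[OF q_pos])
  have prof: "continuous_on ({0..} \<times> {0..}) (\<lambda>z. prof w (fst z))"
    "continuous_on ({0..} \<times> {0..}) (\<lambda>z. prof w (snd z))" for w
    by (rule continuous_on_compose2[OF cont continuous_on_fst[OF continuous_on_id]]; force)
       (rule continuous_on_compose2[OF cont continuous_on_snd[OF continuous_on_id]]; force)
  have "continuous_on ({0..} \<times> {0..}) (\<lambda>z. (grad_energy (scal_pn (fst z) (snd z) u)
      + fst z ^ N * b_mass (posp u) + snd z ^ N * b_mass (negp u)) / p
      + prof (posp u) (fst z) + prof (negp u) (snd z))"
    using assms p_pos
    by (intro continuous_intros continuous_grad_energy_scal_pn prof) (auto simp: D_set_iff)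
  then show ?thesis
  proof (rule continuous_on_eq)
    fix z :: "real \<times> real"
    assume "z \<in> {0..} \<times> {0..}"
    then show "(grad_energy (scal_pn (fst z) (snd z) u) + fst z ^ N * b_mass (posp u)
        + snd z ^ N * b_mass (negp u)) / p + prof (posp u) (fst z) + prof (negp u) (snd z)
        = I (scal_pn (fst z) (snd z) u)"
      using assms by (auto simp: Ifun_scal_pn prof_def c_energy_scal posp_in_D negp_in_D)
  qed
qed

lemma quadrant_attains_max:
  assumes u: "u \<in> D" "posp u \<noteq> (\<lambda>_. 0)" "negp u \<noteq> (\<lambda>_. 0)"
  obtains s0 t0 where "0 \<le> s0" "0 \<le> t0"
    "\<And>s t. 0 \<le> s \<Longrightarrow> 0 \<le> t \<Longrightarrow> I (scal_pn s t u) \<le> I (scal_pn s0 t0 u)"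
proof -
  obtain Yp Zp where p: "0 < Zp"
    "\<And>s. 0 \<le> s \<Longrightarrow> c_energy (scal s (posp u)) = Yp * s powr q - Zp * s powr q * ln s"
    using c_energy_scal_profile[OF posp_in_D[OF u(1)] u(2)] by blast
  obtain Yn Zn where n: "0 < Zn"
    "\<And>t. 0 \<le> t \<Longrightarrow> c_energy (scal t (negp u)) = Yn * t powr q - Zn * t powr q * ln t"
    using c_energy_scal_profile[OF negp_in_D[OF u(1)] u(3)] by blast
  define P where
    "P s = (grad_energy u + b_mass (posp u)) / p * s ^ N + Yp * s powr q - Zp * s powr q * ln s" for s
  define Q where
    "Q t = (grad_energy u + b_mass (negp u)) / p * t ^ N + Yn * t powr q - Zn * t powr q * ln t" for t
  obtain MP where P: "filterlim P at_bot at_top" "\<And>s. 0 \<le> s \<Longrightarrow> P s \<le> MP"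
    using log_profile_coercive[OF p(1) N_less_q] unfolding P_def by blast
  obtain MQ where Q: "filterlim Q at_bot at_top" "\<And>t. 0 \<le> t \<Longrightarrow> Q t \<le> MQ"
    using log_profile_coercive[OF n(1) N_less_q] unfolding Q_def by blast
  have bound: "I (scal_pn s t u) \<le> P s + Q t" if st: "0 \<le> s" "0 \<le> t" for s t
  proof -
    have "grad_energy (scal_pn s t u) / p \<le> (s ^ N + t ^ N) * grad_energy u / p"
      using grad_energy_scal_pn_le[OF _ st] u(1) p_pos by (simp add: D_set_iff divide_right_mono)
    moreover have "P s + Q t - I (scal_pn s t u)
        = (s ^ N + t ^ N) * grad_energy u / p - grad_energy (scal_pn s t u) / p"
      using u(1) st p_pos by (simp add: Ifun_scal_pn P_def Q_def p(2) n(2) field_simps)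
    ultimately show ?thesis
      by linarith
  qed
  show thesis
  proof (rule continuous_attains_max_on_quadrant[OF continuous_Ifun_scal_pn[OF u(1)] P Q])
    show "\<And>s t. 0 \<le> s \<Longrightarrow> 0 \<le> t \<Longrightarrow> I (scal_pn (fst (s, t)) (snd (s, t)) u) \<le> P s + Q t"
      using bound by simp
  next
    fix s0 t0
    assume "0 \<le> s0" "0 \<le> t0" and max: "\<And>s t. 0 \<le> s \<Longrightarrow> 0 \<le> t
      \<Longrightarrow> I (scal_pn (fst (s, t)) (snd (s, t)) u) \<le> I (scal_pn (fst (s0, t0)) (snd (s0, t0)) u)"
    have "I (scal_pn s t u) \<le> I (scal_pn s0 t0 u)" if "0 \<le> s" "0 \<le> t" for s t
      using max[OF that] by simp
    with \<open>0 \<le> s0\<close> \<open>0 \<le> t0\<close> show thesis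
      by (rule that)
  qed
qed

lemma quadrant_max_posp_pos:
  assumes u: "u \<in> D" "posp u \<noteq> (\<lambda>_. 0)" and st: "0 \<le> s0" "0 \<le> t0"
    and max: "\<And>s t. 0 \<le> s \<Longrightarrow> 0 \<le> t \<Longrightarrow> I (scal_pn s t u) \<le> I (scal_pn s0 t0 u)"
  shows "0 < s0"
proof (rule ccontr)
  assume "\<not> 0 < s0"
  with st have s0: "s0 = 0"
    by simp
  obtain Y Z
    where prof: "\<And>s. 0 \<le> s \<Longrightarrow> c_energy (scal s (posp u)) = Y * s powr q - Z * s powr q * ln s"
    using c_energy_scal_profile[OF posp_in_D[OF u(1)] u(2)] by blast
  have "0 < b_mass (posp u) / p"
    using b_mass_pos[OF posp_in_E u(2)] u(1) p_pos by (simp add: D_set_iff)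
  then obtain e where e: "0 < e" "0 < b_mass (posp u) / p * e ^ N + Y * e powr q - Z * e powr q * ln e"
    using log_profile_pos_near_0[OF _ N_less_q] by blast
  have "grad_energy (scal_pn 0 t0 u) / p \<le> grad_energy (scal_pn e t0 u) / p"
    using grad_energy_scal_pn_mono[of u 0 e t0 t0] u(1) e(1) st p_pos
    by (simp add: D_set_iff divide_right_mono)
  moreover have "I (scal_pn e t0 u) - I (scal_pn 0 t0 u) = grad_energy (scal_pn e t0 u) / p
      - grad_energy (scal_pn 0 t0 u) / p + (b_mass (posp u) / p * e ^ N + Y * e powr q - Z * e powr q * ln e)"
    using u(1) st(2) e(1) N_pos p_pos by (simp add: Ifun_scal_pn prof zero_power field_simps)
  ultimately have "I (scal_pn 0 t0 u) < I (scal_pn e t0 u)"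
    using e(2) by linarith
  then show False
    using max[of e t0] e(1) st(2) s0 by simp
qed

text \<open>The tangent inequality of the convex gradient energy at \<open>s0\<close> removes the mixed
  gradient term, leaving a function of \<open>s\<close> alone that is maximal at \<open>s0\<close>.\<close>

lemma quadrant_max_posp_profile_le:
  assumes u: "u \<in> D" and st: "0 \<le> s0" "0 \<le> t0" "0 \<le> s"
    and max: "I (scal_pn s t0 u) \<le> I (scal_pn s0 t0 u)"
  shows "grad_pair (scal_pn s0 t0 u) (posp u) * s + b_mass (posp u) * s ^ N / N + c_energy (scal s (posp u))
    \<le> grad_pair (scal_pn s0 t0 u) (posp u) * s0 + b_mass (posp u) * s0 ^ N / N + c_energy (scal s0 (posp u))"
proof -
  define v G where "v = scal_pn s0 t0 u" and "G = grad_pair v (posp u)"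
  have uE: "u \<in> E"
    using u by (simp add: D_set_iff)
  have "v \<in> E" "scal (s - s0) (posp u) \<in> E" "scal_pn s t0 u \<in> E"
    using uE st by (simp_all add: v_def scal_in_E posp_in_E scal_pn_in_E)
  from grad_energy_above_tangent[OF this]
  have "grad_energy v + N * ((s - s0) * G) \<le> grad_energy (scal_pn s t0 u)"
    by (simp add: G_def grad_pair_scal_right v_def fdiff_scal_pn fdiff_scal algebra_simps)
  then have "(grad_energy v + N * ((s - s0) * G)) / N \<le> grad_energy (scal_pn s t0 u) / N"
    by (rule divide_right_mono) simp
  moreover have "(grad_energy v + N * ((s - s0) * G)) / N = grad_energy v / N + G * s - G * s0"
    using N_pos by (simp add: field_simps)
  moreover have "I (scal_pn x t0 u) = grad_energy (scal_pn x t0 u) / N + b_mass (posp u) * x ^ N / N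
      + t0 ^ N * b_mass (negp u) / N + c_energy (scal x (posp u)) + c_energy (scal t0 (negp u))"
    if "0 \<le> x" for x
    using Ifun_scal_pn[OF u that st(2)] by (simp add: p_eq_N add_divide_distrib mult.commute)
  ultimately show ?thesis
    using max st by (simp add: v_def G_def)
qed

lemma quadrant_max_posp_Nehari:
  assumes u: "u \<in> D" and st: "0 < s0" "0 \<le> t0"
    and max: "\<And>s. 0 < s \<Longrightarrow> I (scal_pn s t0 u) \<le> I (scal_pn s0 t0 u)"
  shows "dI (scal_pn s0 t0 u) (posp (scal_pn s0 t0 u)) = 0"
proof -
  define v G B C L where "v = scal_pn s0 t0 u" and "G = grad_pair v (posp u)"
    and "B = b_mass (posp u)" and "C = c_mass (posp u)" and "L = c_log (posp u)"
  have up: "posp u \<in> D"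
    using u by (rule posp_in_D)
  have "G * s + B * s ^ N / N + (r / q\<^sup>2 * C - L / q) * s powr q - r / q * C * s powr q * ln s
      \<le> G * s0 + B * s0 ^ N / N + (r / q\<^sup>2 * C - L / q) * s0 powr q - r / q * C * s0 powr q * ln s0"
    if "0 < s" for s
    using quadrant_max_posp_profile_le[OF u less_imp_le[OF st(1)] st(2) less_imp_le[OF that] max[OF that]]
      that st
    by (simp add: c_energy_scal[OF up] v_def G_def B_def C_def L_def)
  then have fermat: "G * s0 + B * s0 ^ N + q * (r / q\<^sup>2 * C - L / q) * s0 powr q
      - r / q * C * s0 powr q * (q * ln s0 + 1) = 0"
    by (intro fermat_log_profile[OF st(1) N_pos]) (simp add: mult.assoc)
  have "dI v (posp v) = grad_pair v (posp v) + b_mass (posp v) - c_log (posp v)"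
    using u st by (intro dIfun_posp) (simp add: v_def scal_pn_in_D)
  also have "\<dots> = s0 * G + s0 ^ N * B - s0 powr q * (L + r * ln s0 * C)"
    using st up by (simp add: v_def posp_scal_pn grad_pair_scal_right b_mass_scal c_log_scal
        G_def B_def C_def L_def)
  also have "\<dots> = G * s0 + B * s0 ^ N + q * (r / q\<^sup>2 * C - L / q) * s0 powr q
      - r / q * C * s0 powr q * (q * ln s0 + 1)"
    using q_pos by (simp add: power2_eq_square field_simps)
  finally show ?thesis
    using fermat by (simp add: v_def)
qed

lemma quadrant_max_posp:
  assumes u: "u \<in> D" "posp u \<noteq> (\<lambda>_. 0)" and st: "0 \<le> s0" "0 \<le> t0"
    and max: "\<And>s t. 0 \<le> s \<Longrightarrow> 0 \<le> t \<Longrightarrow> I (scal_pn s t u) \<le> I (scal_pn s0 t0 u)"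
  shows "0 < s0" "dI (scal_pn s0 t0 u) (posp (scal_pn s0 t0 u)) = 0"
proof -
  show s0: "0 < s0"
    using quadrant_max_posp_pos[OF assms] .
  show "dI (scal_pn s0 t0 u) (posp (scal_pn s0 t0 u)) = 0"
    using quadrant_max_posp_Nehari[OF u(1) s0 st(2)] max st(2) by simp
qed

text \<open>The negative part is handled by the symmetry \<open>u \<mapsto> -u\<close>, which swaps the roles of
  \<open>u\<^sup>+\<close> and \<open>u\<^sup>-\<close> and leaves \<open>I\<close> and \<open>I'\<close> invariant.\<close>

lemma quadrant_max_negp:
  assumes u: "u \<in> D" "negp u \<noteq> (\<lambda>_. 0)" and st: "0 \<le> s0" "0 \<le> t0"
    and max: "\<And>s t. 0 \<le> s \<Longrightarrow> 0 \<le> t \<Longrightarrow> I (scal_pn s t u) \<le> I (scal_pn s0 t0 u)"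
  shows "0 < t0" "dI (scal_pn s0 t0 u) (negp (scal_pn s0 t0 u)) = 0"
proof -
  let ?u = "\<lambda>n. - u n"
  have u': "?u \<in> D" "posp ?u \<noteq> (\<lambda>_. 0)"
    using u by (auto simp: D_set_uminus posp_uminus fun_eq_iff)
  have max': "I (scal_pn t s ?u) \<le> I (scal_pn t0 s0 ?u)" if "0 \<le> t" "0 \<le> s" for s t
    using max[OF that(2,1)] by (simp add: scal_pn_uminus Ifun_uminus)
  note quadrant_max_posp[OF u' st(2,1) max']
  then show "0 < t0" "dI (scal_pn s0 t0 u) (negp (scal_pn s0 t0 u)) = 0"
    by (simp_all add: scal_pn_uminus posp_uminus dIfun_uminus)
qed

lemma quadrant_attains_max_on_NodalNehari:
  assumes u: "u \<in> D" "posp u \<noteq> (\<lambda>_. 0)" "negp u \<noteq> (\<lambda>_. 0)"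
  obtains s0 t0 where "0 < s0" "0 < t0" "scal_pn s0 t0 u \<in> NodalNehari a b c p q r"
    "\<And>s t. 0 \<le> s \<Longrightarrow> 0 \<le> t \<Longrightarrow> I (scal_pn s t u) \<le> I (scal_pn s0 t0 u)"
proof -
  obtain s0 t0 where st: "0 \<le> s0" "0 \<le> t0"
    and max: "\<And>s t. 0 \<le> s \<Longrightarrow> 0 \<le> t \<Longrightarrow> I (scal_pn s t u) \<le> I (scal_pn s0 t0 u)"
    using quadrant_attains_max[OF u] by blast
  note pos = quadrant_max_posp[OF u(1,2) st max] and neg = quadrant_max_negp[OF u(1,3) st max]
  have "scal_pn s0 t0 u \<in> NodalNehari a b c p q r"
    using u st pos neg
    by (simp add: NodalNehari_def scal_pn_in_D posp_scal_pn negp_scal_pn scal_eq_0_iff)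
  then show thesis
    using that pos(1) neg(1) max by blast
qed

lemma ray_max_exists:
  assumes "u \<in> D" "u \<noteq> (\<lambda>_. 0)"
  shows "\<exists>t\<ge>0. \<forall>s\<ge>0. I (scal s u) \<le> I (scal t u)"
proof -
  obtain t0 where "0 < t0" "scal t0 u \<in> Nehari a b c p q r"
    "\<And>s. 0 \<le> s \<Longrightarrow> I (scal s u) \<le> I (scal t0 u)"
    using ray_attains_max_on_Nehari[OF assms] by blast
  then show ?thesis
    by (intro exI[of _ t0]) simp
qed

lemma quadrant_max_exists:
  assumes "u \<in> D" "posp u \<noteq> (\<lambda>_. 0)" "negp u \<noteq> (\<lambda>_. 0)"
  shows "\<exists>s\<ge>0. \<exists>t\<ge>0. \<forall>s'\<ge>0. \<forall>t'\<ge>0.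
    I (\<lambda>n. s' * posp u n + t' * negp u n) \<le> I (\<lambda>n. s * posp u n + t * negp u n)"
proof -
  obtain s0 t0 where st: "0 < s0" "0 < t0" "scal_pn s0 t0 u \<in> NodalNehari a b c p q r"
    and max: "\<And>s t. 0 \<le> s \<Longrightarrow> 0 \<le> t \<Longrightarrow> I (scal_pn s t u) \<le> I (scal_pn s0 t0 u)"
    using quadrant_attains_max_on_NodalNehari[OF assms] by blast
  have le: "I (\<lambda>n. s * posp u n + t * negp u n) \<le> I (\<lambda>n. s0 * posp u n + t0 * negp u n)"
    if "0 \<le> s" "0 \<le> t" for s t
    using max[OF that] unfolding scal_pn_def .
  show ?thesis
    by (intro exI[of _ s0] exI[of _ t0] conjI allI impI le) (use st in simp_all)
qed

lemma ray_sup_at_Nehari: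
  assumes "v \<in> Nehari a b c p q r"
  shows "(SUP t\<in>{0..}. I (scal t v)) = I v"
proof (rule cSup_eq_maximum)
  show "I v \<in> (\<lambda>t. I (scal t v)) ` {0..}"
    by (rule image_eqI[of _ _ 1]) (simp_all add: scal_1)
qed (use assms Nehari_point_is_ray_max in \<open>auto simp: Nehari_def\<close>)

lemma ray_sup_attained_on_Nehari:
  assumes "u \<in> D" "u \<noteq> (\<lambda>_. 0)"
  shows "\<exists>w \<in> Nehari a b c p q r. (SUP t\<in>{0..}. I (scal t u)) = I w"
proof -
  obtain t0 where t0: "0 < t0" "scal t0 u \<in> Nehari a b c p q r"
    "\<And>s. 0 \<le> s \<Longrightarrow> I (scal s u) \<le> I (scal t0 u)"
    using ray_attains_max_on_Nehari[OF assms] by blast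
  have "(SUP t\<in>{0..}. I (scal t u)) = I (scal t0 u)"
    using t0 by (intro cSup_eq_maximum) auto
  then show ?thesis
    using t0(2) by blast
qed

lemma quadrant_sup_at_NodalNehari:
  assumes "v \<in> NodalNehari a b c p q r"
  shows "(SUP st\<in>{0..} \<times> {0..}. I (\<lambda>n. fst st * posp v n + snd st * negp v n)) = I v"
proof (rule cSup_eq_maximum)
  show "I v \<in> (\<lambda>st. I (\<lambda>n. fst st * posp v n + snd st * negp v n)) ` ({0..} \<times> {0..})"
    by (rule image_eqI[of _ _ "(1, 1)"]) (simp_all add: posp_plus_negp)
next
  fix y
  assume "y \<in> (\<lambda>st. I (\<lambda>n. fst st * posp v n + snd st * negp v n)) ` ({0..} \<times> {0..})"
  then obtain s t where "0 \<le> s" "0 \<le> t" "y = I (scal_pn s t v)"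
    by (auto simp: scal_pn_def)
  then show "y \<le> I v"
    using assms nodal_point_is_quadrant_max by (simp add: NodalNehari_def)
qed

lemma quadrant_sup_attained_on_NodalNehari:
  assumes "u \<in> D" "posp u \<noteq> (\<lambda>_. 0)" "negp u \<noteq> (\<lambda>_. 0)"
  shows "\<exists>w \<in> NodalNehari a b c p q r.
    (SUP st\<in>{0..} \<times> {0..}. I (\<lambda>n. fst st * posp u n + snd st * negp u n)) = I w"
proof -
  obtain s0 t0 where st: "0 < s0" "0 < t0" "scal_pn s0 t0 u \<in> NodalNehari a b c p q r"
    and max: "\<And>s t. 0 \<le> s \<Longrightarrow> 0 \<le> t \<Longrightarrow> I (scal_pn s t u) \<le> I (scal_pn s0 t0 u)"
    using quadrant_attains_max_on_NodalNehari[OF assms] by blast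
  have "(SUP st\<in>{0..} \<times> {0..}. I (scal_pn (fst st) (snd st) u)) = I (scal_pn s0 t0 u)"
  proof (rule cSup_eq_maximum)
    show "I (scal_pn s0 t0 u) \<in> (\<lambda>st. I (scal_pn (fst st) (snd st) u)) ` ({0..} \<times> {0..})"
      using st(1,2) by (intro image_eqI[of _ _ "(s0, t0)"]) auto
  next
    fix y
    assume "y \<in> (\<lambda>st. I (scal_pn (fst st) (snd st) u)) ` ({0..} \<times> {0..})"
    then obtain s t where "0 \<le> s" "0 \<le> t" "y = I (scal_pn s t u)"
      by auto
    then show "y \<le> I (scal_pn s0 t0 u)"
      using max by simp
  qed
  then show ?thesis
    using st(3) unfolding scal_pn_def by blast
qed

lemma Ifun_Nehari_eq_ray_sups:
  "I ` Nehari a b c p q r = (\<lambda>u. SUP t\<in>{0..}. I (scal t u)) ` {u \<in> D. u \<noteq> (\<lambda>_. 0)}"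
proof (intro equalityI subsetI)
  fix x
  assume "x \<in> I ` Nehari a b c p q r"
  then obtain v where "v \<in> Nehari a b c p q r" "x = I v"
    by blast
  then show "x \<in> (\<lambda>u. SUP t\<in>{0..}. I (scal t u)) ` {u \<in> D. u \<noteq> (\<lambda>_. 0)}"
    using ray_sup_at_Nehari by (intro image_eqI[of _ _ v]) (auto simp: Nehari_def)
next
  fix x
  assume "x \<in> (\<lambda>u. SUP t\<in>{0..}. I (scal t u)) ` {u \<in> D. u \<noteq> (\<lambda>_. 0)}"
  then obtain u where "u \<in> D" "u \<noteq> (\<lambda>_. 0)" "x = (SUP t\<in>{0..}. I (scal t u))"
    by blast
  then show "x \<in> I ` Nehari a b c p q r"
    using ray_sup_attained_on_Nehari by blast
qed

lemma Ifun_NodalNehari_eq_quadrant_sups: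
  "I ` NodalNehari a b c p q r = (\<lambda>u. SUP st\<in>{0..} \<times> {0..}. I (\<lambda>n. fst st * posp u n + snd st * negp u n))
    ` {u \<in> D. posp u \<noteq> (\<lambda>_. 0) \<and> negp u \<noteq> (\<lambda>_. 0)}"
proof (intro equalityI subsetI)
  fix x
  assume "x \<in> I ` NodalNehari a b c p q r"
  then obtain v where "v \<in> NodalNehari a b c p q r" "x = I v"
    by blast
  then show "x \<in> (\<lambda>u. SUP st\<in>{0..} \<times> {0..}. I (\<lambda>n. fst st * posp u n + snd st * negp u n))
    ` {u \<in> D. posp u \<noteq> (\<lambda>_. 0) \<and> negp u \<noteq> (\<lambda>_. 0)}"
    using quadrant_sup_at_NodalNehari by (intro image_eqI[of _ _ v]) (auto simp: NodalNehari_def)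
next
  fix x
  assume "x \<in> (\<lambda>u. SUP st\<in>{0..} \<times> {0..}. I (\<lambda>n. fst st * posp u n + snd st * negp u n))
    ` {u \<in> D. posp u \<noteq> (\<lambda>_. 0) \<and> negp u \<noteq> (\<lambda>_. 0)}"
  then obtain u where "u \<in> D" "posp u \<noteq> (\<lambda>_. 0)" "negp u \<noteq> (\<lambda>_. 0)"
    "x = (SUP st\<in>{0..} \<times> {0..}. I (\<lambda>n. fst st * posp u n + snd st * negp u n))"
    by blast
  then show "x \<in> I ` NodalNehari a b c p q r"
    using quadrant_sup_attained_on_NodalNehari by blast
qed

end

theorem lemma2p8:
  fixes p q r :: real and a b c :: "int \<Rightarrow> real"
  assumes pq: "1 < p" "p < q"
    and p_even: "\<exists>k::nat. k > 0 \<and> p / 2 = real k"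
    and r1: "r \<ge> 1"
    and apos: "\<And>n. a n > 0" and bpos: "\<And>n. b n > 0" and cpos: "\<And>n. c n > 0"
    and C1: "\<exists>b0>0. \<forall>n. b n \<ge> b0" "filterlim b at_top cofinite"
    and C2: "\<exists>c0>0. \<forall>n. c n \<le> c0" "c summable_on UNIV"
  shows "(\<forall>u \<in> D_set a b c p q r. u \<noteq> (\<lambda>_. 0) \<longrightarrow>
            (\<exists>t\<ge>0. \<forall>s\<ge>0. Ifun a b c p q r (scal s u) \<le> Ifun a b c p q r (scal t u)))
       \<and> Inf (Ifun a b c p q r ` Nehari a b c p q r)
         = Inf ((\<lambda>u. SUP t\<in>{0..}. Ifun a b c p q r (scal t u))
                 ` {u \<in> D_set a b c p q r. u \<noteq> (\<lambda>_. 0)})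
       \<and> (\<forall>u \<in> D_set a b c p q r. posp u \<noteq> (\<lambda>_. 0) \<and> negp u \<noteq> (\<lambda>_. 0) \<longrightarrow>
            (\<exists>s\<ge>0. \<exists>t\<ge>0. \<forall>s'\<ge>0. \<forall>t'\<ge>0.
               Ifun a b c p q r (\<lambda>n. s' * posp u n + t' * negp u n)
               \<le> Ifun a b c p q r (\<lambda>n. s * posp u n + t * negp u n)))
       \<and> Inf (Ifun a b c p q r ` NodalNehari a b c p q r)
         = Inf ((\<lambda>u. SUP st\<in>{0..} \<times> {0..}.
                      Ifun a b c p q r (\<lambda>n. fst st * posp u n + snd st * negp u n))
                 ` {u \<in> D_set a b c p q r. posp u \<noteq> (\<lambda>_. 0) \<and> negp u \<noteq> (\<lambda>_. 0)})"
proof -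
  obtain k :: nat where k: "0 < k" "p / 2 = real k"
    using p_even by blast
  interpret discrete_log_problem p q r a b c "2 * k"
  proof
    show "p = real (2 * k)" "2 \<le> 2 * k"
      using k by simp_all
  qed (use pq r1 apos bpos cpos C1(1) C2(2) in simp_all)
  show ?thesis
    unfolding Ifun_Nehari_eq_ray_sups Ifun_NodalNehari_eq_quadrant_sups
    by (intro conjI ballI impI refl ray_max_exists quadrant_max_exists) simp_all
qed

end
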